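(* Let $A$ be a braided group in $\mathcal C$ with invertible antipode $S$ (inverse $S^-$), and let $(Y,\mu_r,\Delta_r)$ be a right crossed module over $A$. Put $\sigma_{Y/A}:=\mu_r\circ(Y\otimes S)\circ\Delta_r$ and $\sigma^-_{Y/A}:=\mu_r\circ\Psi^{-1}_{Y,A}\circ(S^-\circ S^-\otimes Y)\circ\Psi^{-1}_{A,Y}\circ\Delta_r$. Then $\sigma_{Y/A}$ is invertible with inverse $\sigma^-_{Y/A}$, and $\sigma_{Y/A}$ is a morphism of left $A$-modules and left $A$-comodules (hence of left crossed modules) from $(Y,\ \mu_r\circ\Psi^{-1}_{Y,A}\circ(S^-\otimes Y),\ (S\otimes Y)\circ\Psi_{Y,A}\circ\Delta_r)$ to $(Y,\ \mu_r\circ\Psi_{A,Y}\circ(S\otimes Y),\ (S^-\otimes Y)\circ\Psi^{-1}_{A,Y}\circ\Delta_r)$.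
   Context: $\mathcal C$ is a braided monoidal category, assumed strict, with tensor product $\otimes$, unit $\underline 1$ and invertible braiding $\Psi_{X,Y}:X\otimes Y\to Y\otimes X$. Inside tensor products of morphisms an object name $X$ stands for ${\rm id}_X$. A braided group is a bialgebra $(A,\mu,\eta,\Delta,\epsilon)$ in $\mathcal C$ (with $\Delta\circ\mu=(\mu\otimes\mu)\circ(A\otimes\Psi_{A,A}\otimes A)\circ(\Delta\otimes\Delta)$, $\Delta\circ\eta=\eta\otimes\eta$, $\epsilon\circ\mu=\epsilon\otimes\epsilon$, $\epsilon\circ\eta={\rm id}_{\underline 1}$) with antipode $S$: $\mu\circ(S\otimes A)\circ\Delta=\eta\circ\epsilon=\mu\circ(A\otimes S)\circ\Delta$. A right crossed module over $A$ is a right $A$-module $\mu_r:Y\otimes A\to Y$ and right $A$-comodule $\Delta_r:Y\to Y\otimes A$ such that $(Y\otimes\mu)\circ(\Psi_{A,Y}\otimes A)\circ(A\otimes(\Delta_r\circ\mu_r))\circ(\Psi_{Y,A}\otimes A)\circ(Y\otimes\Delta)=(\mu_r\otimes\mu)\circ(Y\otimes\Psi_{A,A}\otimes A)\circ(\Delta_r\otimes\Delta)$. *)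

theory Defs
  imports Main
begin

text \<open>A (small-data presentation of a) strict braided monoidal category:
  objects of type 'o, morphisms of type 'm, with domain/codomain, a predicate
  singling out the genuine arrows, composition (Cmp g f = g o f), identities,
  the tensor product on objects (TO) and on morphisms (TM), the unit object,
  the braiding Br X Y : X (x) Y -> Y (x) X and its inverse BrInv X Y : Y (x) X -> X (x) Y.\<close>

record ('o, 'm) bmcat =
  Dom :: "'m \<Rightarrow> 'o"
  Cod :: "'m \<Rightarrow> 'o"
  Arr :: "'m \<Rightarrow> bool"
  Cmp :: "'m \<Rightarrow> 'm \<Rightarrow> 'm"
  Id :: "'o \<Rightarrow> 'm"
  TO :: "'o \<Rightarrow> 'o \<Rightarrow> 'o"
  TM :: "'m \<Rightarrow> 'm \<Rightarrow> 'm"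
  Unit :: "'o"
  Br :: "'o \<Rightarrow> 'o \<Rightarrow> 'm"
  BrInv :: "'o \<Rightarrow> 'o \<Rightarrow> 'm"

definition Hom :: "('o, 'm) bmcat \<Rightarrow> 'm \<Rightarrow> 'o \<Rightarrow> 'o \<Rightarrow> bool" where
  "Hom C f X Y \<longleftrightarrow> Arr C f \<and> Dom C f = X \<and> Cod C f = Y"

definition braided_strict_monoidal :: "('o, 'm) bmcat \<Rightarrow> bool" where
  "braided_strict_monoidal C \<longleftrightarrow>
    \<comment> \<open>category\<close>
    (\<forall>X. Hom C (Id C X) X X) \<and>
    (\<forall>f g. Arr C f \<and> Arr C g \<and> Dom C g = Cod C f \<longrightarrow> Hom C (Cmp C g f) (Dom C f) (Cod C g)) \<and>
    (\<forall>f. Arr C f \<longrightarrow> Cmp C f (Id C (Dom C f)) = f \<and> Cmp C (Id C (Cod C f)) f = f) \<and>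
    (\<forall>f g h. Arr C f \<and> Arr C g \<and> Arr C h \<and> Dom C g = Cod C f \<and> Dom C h = Cod C g \<longrightarrow>
        Cmp C h (Cmp C g f) = Cmp C (Cmp C h g) f) \<and>
    \<comment> \<open>tensor bifunctor\<close>
    (\<forall>f g. Arr C f \<and> Arr C g \<longrightarrow>
        Hom C (TM C f g) (TO C (Dom C f) (Dom C g)) (TO C (Cod C f) (Cod C g))) \<and>
    (\<forall>X Y. TM C (Id C X) (Id C Y) = Id C (TO C X Y)) \<and>
    (\<forall>f g f' g'. Arr C f \<and> Arr C g \<and> Arr C f' \<and> Arr C g' \<and> Dom C g = Cod C f \<and> Dom C g' = Cod C f' \<longrightarrow>
        TM C (Cmp C g f) (Cmp C g' f') = Cmp C (TM C g g') (TM C f f')) \<and>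
    \<comment> \<open>strictness\<close>
    (\<forall>X Y Z. TO C (TO C X Y) Z = TO C X (TO C Y Z)) \<and>
    (\<forall>X. TO C (Unit C) X = X \<and> TO C X (Unit C) = X) \<and>
    (\<forall>f g h. Arr C f \<and> Arr C g \<and> Arr C h \<longrightarrow> TM C (TM C f g) h = TM C f (TM C g h)) \<and>
    (\<forall>f. Arr C f \<longrightarrow> TM C (Id C (Unit C)) f = f \<and> TM C f (Id C (Unit C)) = f) \<and>
    \<comment> \<open>invertible braiding\<close>
    (\<forall>X Y. Hom C (Br C X Y) (TO C X Y) (TO C Y X)) \<and>
    (\<forall>X Y. Hom C (BrInv C X Y) (TO C Y X) (TO C X Y)) \<and>
    (\<forall>X Y. Cmp C (Br C X Y) (BrInv C X Y) = Id C (TO C Y X) \<and>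
           Cmp C (BrInv C X Y) (Br C X Y) = Id C (TO C X Y)) \<and>
    (\<forall>f g. Arr C f \<and> Arr C g \<longrightarrow>
        Cmp C (Br C (Cod C f) (Cod C g)) (TM C f g) = Cmp C (TM C g f) (Br C (Dom C f) (Dom C g))) \<and>
    (\<forall>X Y Z. Br C X (TO C Y Z) = Cmp C (TM C (Id C Y) (Br C X Z)) (TM C (Br C X Y) (Id C Z))) \<and>
    (\<forall>X Y Z. Br C (TO C X Y) Z = Cmp C (TM C (Br C X Z) (Id C Y)) (TM C (Id C X) (Br C Y Z)))"

definition bialgebra :: "('o, 'm) bmcat \<Rightarrow> 'o \<Rightarrow> 'm \<Rightarrow> 'm \<Rightarrow> 'm \<Rightarrow> 'm \<Rightarrow> bool" where
  "bialgebra C A mu eta Delta eps \<longleftrightarrow>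
    Hom C mu (TO C A A) A \<and> Hom C eta (Unit C) A \<and>
    Hom C Delta A (TO C A A) \<and> Hom C eps A (Unit C) \<and>
    Cmp C mu (TM C mu (Id C A)) = Cmp C mu (TM C (Id C A) mu) \<and>
    Cmp C mu (TM C eta (Id C A)) = Id C A \<and> Cmp C mu (TM C (Id C A) eta) = Id C A \<and>
    Cmp C (TM C Delta (Id C A)) Delta = Cmp C (TM C (Id C A) Delta) Delta \<and>
    Cmp C (TM C eps (Id C A)) Delta = Id C A \<and> Cmp C (TM C (Id C A) eps) Delta = Id C A \<and>
    Cmp C Delta mu =
      Cmp C (TM C mu mu) (Cmp C (TM C (Id C A) (TM C (Br C A A) (Id C A))) (TM C Delta Delta)) \<and>
    Cmp C Delta eta = TM C eta eta \<and>
    Cmp C eps mu = TM C eps eps \<and>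
    Cmp C eps eta = Id C (Unit C)"

definition braided_group :: "('o, 'm) bmcat \<Rightarrow> 'o \<Rightarrow> 'm \<Rightarrow> 'm \<Rightarrow> 'm \<Rightarrow> 'm \<Rightarrow> 'm \<Rightarrow> bool" where
  "braided_group C A mu eta Delta eps S \<longleftrightarrow>
    bialgebra C A mu eta Delta eps \<and> Hom C S A A \<and>
    Cmp C mu (Cmp C (TM C S (Id C A)) Delta) = Cmp C eta eps \<and>
    Cmp C mu (Cmp C (TM C (Id C A) S) Delta) = Cmp C eta eps"

definition right_module :: "('o, 'm) bmcat \<Rightarrow> 'o \<Rightarrow> 'm \<Rightarrow> 'm \<Rightarrow> 'o \<Rightarrow> 'm \<Rightarrow> bool" where
  "right_module C A mu eta Y mur \<longleftrightarrow>
    Hom C mur (TO C Y A) Y \<and>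
    Cmp C mur (TM C mur (Id C A)) = Cmp C mur (TM C (Id C Y) mu) \<and>
    Cmp C mur (TM C (Id C Y) eta) = Id C Y"

definition right_comodule :: "('o, 'm) bmcat \<Rightarrow> 'o \<Rightarrow> 'm \<Rightarrow> 'm \<Rightarrow> 'o \<Rightarrow> 'm \<Rightarrow> bool" where
  "right_comodule C A Delta eps Y Dr \<longleftrightarrow>
    Hom C Dr Y (TO C Y A) \<and>
    Cmp C (TM C Dr (Id C A)) Dr = Cmp C (TM C (Id C Y) Delta) Dr \<and>
    Cmp C (TM C (Id C Y) eps) Dr = Id C Y"

definition right_crossed_module ::
  "('o, 'm) bmcat \<Rightarrow> 'o \<Rightarrow> 'm \<Rightarrow> 'm \<Rightarrow> 'm \<Rightarrow> 'm \<Rightarrow> 'o \<Rightarrow> 'm \<Rightarrow> 'm \<Rightarrow> bool" where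
  "right_crossed_module C A mu eta Delta eps Y mur Dr \<longleftrightarrow>
    right_module C A mu eta Y mur \<and> right_comodule C A Delta eps Y Dr \<and>
    Cmp C (TM C (Id C Y) mu)
      (Cmp C (TM C (Br C A Y) (Id C A))
        (Cmp C (TM C (Id C A) (Cmp C Dr mur))
          (Cmp C (TM C (Br C Y A) (Id C A)) (TM C (Id C Y) Delta))))
    = Cmp C (TM C mur mu) (Cmp C (TM C (Id C Y) (TM C (Br C A A) (Id C A))) (TM C Dr Delta))"

end

theory Submission
  imports Defs
begin

text \<open>
  \<open>\<sigma> = \<mu>\<^sub>r \<circ> (Y \<otimes> S) \<circ> \<Delta>\<^sub>r\<close> is the braided form of \<open>y \<mapsto> y\<^sub>(\<^sub>0\<^sub>) S(y\<^sub>(\<^sub>1\<^sub>))\<close>.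
  The antipode is anti-multiplicative and anti-comultiplicative,
  \<open>S \<circ> \<mu> = \<mu> \<circ> \<Psi> \<circ> (S \<otimes> S)\<close> and \<open>\<Delta> \<circ> S = (S \<otimes> S) \<circ> \<Psi> \<circ> \<Delta>\<close>, since both sides are
  convolution inverses of \<open>\<mu>\<close> (resp. \<open>\<Delta>\<close>). With these, the crossed module condition gives
  the twisted equivariance laws
    \<open>\<sigma> \<circ> \<mu>\<^sub>r = \<mu>\<^sub>r \<circ> (\<sigma> \<otimes> S\<^sup>2) \<circ> \<Psi>\<^sub>A\<^sub>,\<^sub>Y \<circ> \<Psi>\<^sub>Y\<^sub>,\<^sub>A\<close> and
    \<open>\<Delta>\<^sub>r \<circ> \<sigma> = (\<sigma> \<otimes> S\<^sup>2) \<circ> \<Psi>\<^sub>A\<^sub>,\<^sub>Y \<circ> \<Psi>\<^sub>Y\<^sub>,\<^sub>A \<circ> \<Delta>\<^sub>r\<close>.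
  In \<open>\<sigma> \<circ> \<sigma>\<^sup>-\<close> and \<open>\<sigma>\<^sup>- \<circ> \<sigma>\<close> the double braiding cancels against the inverse braidings
  of \<open>\<sigma>\<^sup>-\<close> and \<open>S\<^sup>2\<close> against \<open>S\<^sup>- \<circ> S\<^sup>-\<close>, leaving \<open>\<mu>\<^sub>r \<circ> (\<sigma> \<otimes> A) \<circ> \<Delta>\<^sub>r\<close> in both cases,
  which the (co)module axioms and the antipode axiom reduce to the identity.
  The same two laws, together with naturality of the braiding, give the module and comodule
  map properties.
\<close>

section \<open>Braided strict monoidal categories\<close>

locale braided_cat =
  fixes C :: "('o, 'm) bmcat"
  assumes braided: "braided_strict_monoidal C"
begin

lemmas structure_axioms = braided[unfolded braided_strict_monoidal_def]

lemma hom_id: "Hom C (Id C X) X X"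
  using structure_axioms by (elim conjE; metis)
lemma hom_comp: "Arr C f \<Longrightarrow> Arr C g \<Longrightarrow> Dom C g = Cod C f \<Longrightarrow> Hom C (Cmp C g f) (Dom C f) (Cod C g)"
  using structure_axioms by (elim conjE; metis)
lemma comp_id_right: "Arr C f \<Longrightarrow> Cmp C f (Id C (Dom C f)) = f"
  using structure_axioms by (elim conjE; metis)
lemma comp_id_left: "Arr C f \<Longrightarrow> Cmp C (Id C (Cod C f)) f = f"
  using structure_axioms by (elim conjE; metis)
lemma comp_assoc:
  "Arr C f \<Longrightarrow> Arr C g \<Longrightarrow> Arr C h \<Longrightarrow> Dom C g = Cod C f \<Longrightarrow> Dom C h = Cod C g \<Longrightarrow>
   Cmp C (Cmp C h g) f = Cmp C h (Cmp C g f)"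
  using structure_axioms by (elim conjE; metis)
lemma hom_tensor:
  "Arr C f \<Longrightarrow> Arr C g \<Longrightarrow> Hom C (TM C f g) (TO C (Dom C f) (Dom C g)) (TO C (Cod C f) (Cod C g))"
  using structure_axioms by (elim conjE; metis)
lemma tensor_id [simp]: "TM C (Id C X) (Id C Y) = Id C (TO C X Y)"
  using structure_axioms by (elim conjE; metis)
lemma interchange:
  "Arr C f \<Longrightarrow> Arr C g \<Longrightarrow> Arr C f' \<Longrightarrow> Arr C g' \<Longrightarrow> Dom C g = Cod C f \<Longrightarrow> Dom C g' = Cod C f' \<Longrightarrow>
   TM C (Cmp C g f) (Cmp C g' f') = Cmp C (TM C g g') (TM C f f')"
  using structure_axioms by (elim conjE; metis)
lemma obj_tensor_assoc [simp]: "TO C (TO C X Y) Z = TO C X (TO C Y Z)"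
  using structure_axioms by (elim conjE; metis)
lemma obj_tensor_unit [simp]: "TO C (Unit C) X = X" "TO C X (Unit C) = X"
  using structure_axioms by (elim conjE; metis)+
lemma tensor_assoc: "Arr C f \<Longrightarrow> Arr C g \<Longrightarrow> Arr C h \<Longrightarrow> TM C (TM C f g) h = TM C f (TM C g h)"
  using structure_axioms by (elim conjE; metis)
lemma tensor_unit [simp]: "Arr C f \<Longrightarrow> TM C (Id C (Unit C)) f = f" "Arr C f \<Longrightarrow> TM C f (Id C (Unit C)) = f"
  using structure_axioms by (elim conjE; metis)+
lemma hom_braid: "Hom C (Br C X Y) (TO C X Y) (TO C Y X)"
  using structure_axioms by (elim conjE; metis)
lemma hom_braid_inv: "Hom C (BrInv C X Y) (TO C Y X) (TO C X Y)"
  using structure_axioms by (elim conjE; metis)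
lemma braid_inverse:
  "Cmp C (Br C X Y) (BrInv C X Y) = Id C (TO C Y X)" "Cmp C (BrInv C X Y) (Br C X Y) = Id C (TO C X Y)"
  using structure_axioms by (elim conjE; metis)+
lemma braid_natural:
  "Arr C f \<Longrightarrow> Arr C g \<Longrightarrow>
   Cmp C (Br C (Cod C f) (Cod C g)) (TM C f g) = Cmp C (TM C g f) (Br C (Dom C f) (Dom C g))"
  using structure_axioms by (elim conjE; metis)
lemma braid_hexagon_right: "Br C X (TO C Y Z) = Cmp C (TM C (Id C Y) (Br C X Z)) (TM C (Br C X Y) (Id C Z))"
  using structure_axioms by (elim conjE; metis)
lemma braid_hexagon_left: "Br C (TO C X Y) Z = Cmp C (TM C (Br C X Z) (Id C Y)) (TM C (Id C X) (Br C Y Z))"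
  using structure_axioms by (elim conjE; metis)

lemma arr_id [simp]: "Arr C (Id C X)" and dom_id [simp]: "Dom C (Id C X) = X"
  and cod_id [simp]: "Cod C (Id C X) = X"
  using hom_id unfolding Hom_def by auto
lemma arr_comp [simp]: "Arr C f \<Longrightarrow> Arr C g \<Longrightarrow> Dom C g = Cod C f \<Longrightarrow> Arr C (Cmp C g f)"
  and dom_comp [simp]: "Arr C f \<Longrightarrow> Arr C g \<Longrightarrow> Dom C g = Cod C f \<Longrightarrow> Dom C (Cmp C g f) = Dom C f"
  and cod_comp [simp]: "Arr C f \<Longrightarrow> Arr C g \<Longrightarrow> Dom C g = Cod C f \<Longrightarrow> Cod C (Cmp C g f) = Cod C g"
  using hom_comp unfolding Hom_def by auto
lemma arr_tensor [simp]: "Arr C f \<Longrightarrow> Arr C g \<Longrightarrow> Arr C (TM C f g)"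
  and dom_tensor [simp]: "Arr C f \<Longrightarrow> Arr C g \<Longrightarrow> Dom C (TM C f g) = TO C (Dom C f) (Dom C g)"
  and cod_tensor [simp]: "Arr C f \<Longrightarrow> Arr C g \<Longrightarrow> Cod C (TM C f g) = TO C (Cod C f) (Cod C g)"
  using hom_tensor unfolding Hom_def by auto
lemma arr_braid [simp]: "Arr C (Br C X Y)" "Dom C (Br C X Y) = TO C X Y" "Cod C (Br C X Y) = TO C Y X"
  using hom_braid unfolding Hom_def by auto
lemma arr_braid_inv [simp]:
  "Arr C (BrInv C X Y)" "Dom C (BrInv C X Y) = TO C Y X" "Cod C (BrInv C X Y) = TO C X Y"
  using hom_braid_inv unfolding Hom_def by auto

lemma Id_comp [simp]: "Arr C f \<Longrightarrow> Cod C f = X \<Longrightarrow> Cmp C (Id C X) f = f"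
  using comp_id_left by blast
lemma comp_Id [simp]: "Arr C f \<Longrightarrow> Dom C f = X \<Longrightarrow> Cmp C f (Id C X) = f"
  using comp_id_right by blast

lemma idempotent_split_mono_is_id:
  assumes "Arr C b" "Arr C i" "Cod C b = Dom C b" "Dom C i = Cod C b"
    and "Cmp C i b = Id C (Dom C b)" "Cmp C b b = b"
  shows "b = Id C (Dom C b)"
proof -
  have "b = Cmp C (Cmp C i b) b"
    using assms(1,3,5) by simp
  also have "\<dots> = Cmp C i (Cmp C b b)"
    using assms(1-4) by (simp add: comp_assoc)
  finally show ?thesis
    using assms(5,6) by simp
qed

lemma braid_unit: "Br C (Unit C) Z = Id C Z" "Br C Z (Unit C) = Id C Z"
proof -
  have "Br C (Unit C) Z = Cmp C (TM C (Br C (Unit C) Z) (Id C (Unit C))) (TM C (Id C (Unit C)) (Br C (Unit C) Z))"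
    using braid_hexagon_left[of "Unit C" "Unit C" Z] by (simp only: obj_tensor_unit)
  then have "Cmp C (Br C (Unit C) Z) (Br C (Unit C) Z) = Br C (Unit C) Z"
    by simp
  then have "Br C (Unit C) Z = Id C (Dom C (Br C (Unit C) Z))"
    by (intro idempotent_split_mono_is_id[where i = "BrInv C (Unit C) Z"]) (simp_all add: braid_inverse)
  then show "Br C (Unit C) Z = Id C Z"
    by simp
  have "Br C Z (Unit C) = Cmp C (TM C (Id C (Unit C)) (Br C Z (Unit C))) (TM C (Br C Z (Unit C)) (Id C (Unit C)))"
    using braid_hexagon_right[of Z "Unit C" "Unit C"] by (simp only: obj_tensor_unit)
  then have "Cmp C (Br C Z (Unit C)) (Br C Z (Unit C)) = Br C Z (Unit C)"
    by simp
  then have "Br C Z (Unit C) = Id C (Dom C (Br C Z (Unit C)))"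
    by (intro idempotent_split_mono_is_id[where i = "BrInv C Z (Unit C)"]) (simp_all add: braid_inverse)
  then show "Br C Z (Unit C) = Id C Z"
    by simp
qed

lemma braid_inv_unit: "BrInv C (Unit C) Z = Id C Z" "BrInv C Z (Unit C) = Id C Z"
  using braid_inverse(2)[of "Unit C" Z] braid_inverse(2)[of Z "Unit C"] by (simp_all add: braid_unit)

lemma braid_inv_unique:
  assumes h: "Arr C h" "Dom C h = TO C Y X" "Cmp C h (Br C X Y) = Id C (TO C X Y)"
  shows "h = BrInv C X Y"
proof -
  have "h = Cmp C h (Cmp C (Br C X Y) (BrInv C X Y))"
    using h braid_inverse(1)[of X Y] by simp
  also have "\<dots> = Cmp C (Cmp C h (Br C X Y)) (BrInv C X Y)"
    using h(1,2) by (simp add: comp_assoc)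
  also have "\<dots> = BrInv C X Y"
    using h by simp
  finally show ?thesis .
qed

lemma braid_inv_natural:
  assumes "Arr C f" "Arr C g"
  shows "Cmp C (BrInv C (Cod C f) (Cod C g)) (TM C g f) = Cmp C (TM C f g) (BrInv C (Dom C f) (Dom C g))"
proof -
  let ?bc = "Br C (Cod C f) (Cod C g)" and ?ic = "BrInv C (Cod C f) (Cod C g)"
  let ?bd = "Br C (Dom C f) (Dom C g)" and ?id = "BrInv C (Dom C f) (Dom C g)"
  have "Cmp C (TM C f g) ?id = Cmp C (Cmp C ?ic ?bc) (Cmp C (TM C f g) ?id)"
    using assms braid_inverse(2)[of "Cod C f" "Cod C g"] by simp
  also have "\<dots> = Cmp C ?ic (Cmp C (Cmp C ?bc (TM C f g)) ?id)"
    using assms by (simp add: comp_assoc[symmetric])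
  also have "\<dots> = Cmp C ?ic (Cmp C (Cmp C (TM C g f) ?bd) ?id)"
    using braid_natural assms by simp
  also have "\<dots> = Cmp C ?ic (Cmp C (TM C g f) (Cmp C ?bd ?id))"
    using assms by (simp add: comp_assoc)
  also have "\<dots> = Cmp C ?ic (TM C g f)"
    using assms braid_inverse(1)[of "Dom C f" "Dom C g"] by simp
  finally show ?thesis by simp
qed

lemma braid_inv_hexagon_left:
  "BrInv C (TO C X Y) Z = Cmp C (TM C (Id C X) (BrInv C Y Z)) (TM C (BrInv C X Z) (Id C Y))"
proof -
  let ?h = "Cmp C (TM C (Id C X) (BrInv C Y Z)) (TM C (BrInv C X Z) (Id C Y))"
  have "Cmp C ?h (Br C (TO C X Y) Z) = Cmp C ?h (Cmp C (TM C (Br C X Z) (Id C Y)) (TM C (Id C X) (Br C Y Z)))"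
    using braid_hexagon_left by simp
  also have "\<dots> = Cmp C (TM C (Id C X) (BrInv C Y Z))
      (Cmp C (Cmp C (TM C (BrInv C X Z) (Id C Y)) (TM C (Br C X Z) (Id C Y))) (TM C (Id C X) (Br C Y Z)))"
    by (simp add: comp_assoc[symmetric])
  also have "\<dots> = Cmp C (TM C (Id C X) (BrInv C Y Z)) (TM C (Id C X) (Br C Y Z))"
    by (simp add: interchange[symmetric] braid_inverse)
  also have "\<dots> = Id C (TO C (TO C X Y) Z)"
    by (simp add: interchange[symmetric] braid_inverse)
  finally show ?thesis by (intro braid_inv_unique[symmetric]) auto
qed

lemma braid_inv_hexagon_right:
  "BrInv C X (TO C Y Z) = Cmp C (TM C (BrInv C X Y) (Id C Z)) (TM C (Id C Y) (BrInv C X Z))"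
proof -
  let ?h = "Cmp C (TM C (BrInv C X Y) (Id C Z)) (TM C (Id C Y) (BrInv C X Z))"
  have "Cmp C ?h (Br C X (TO C Y Z)) = Cmp C ?h (Cmp C (TM C (Id C Y) (Br C X Z)) (TM C (Br C X Y) (Id C Z)))"
    using braid_hexagon_right by simp
  also have "\<dots> = Cmp C (TM C (BrInv C X Y) (Id C Z))
      (Cmp C (Cmp C (TM C (Id C Y) (BrInv C X Z)) (TM C (Id C Y) (Br C X Z))) (TM C (Br C X Y) (Id C Z)))"
    by (simp add: comp_assoc[symmetric])
  also have "\<dots> = Cmp C (TM C (BrInv C X Y) (Id C Z)) (TM C (Br C X Y) (Id C Z))"
    by (simp add: interchange[symmetric] braid_inverse)
  also have "\<dots> = Id C (TO C X (TO C Y Z))"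
    by (simp add: interchange[symmetric] braid_inverse)
  finally show ?thesis by (intro braid_inv_unique[symmetric]) auto
qed

end

section \<open>String diagrams\<close>

text \<open>A layer \<open>L p g s t q\<close> denotes \<open>id\<^sub>p \<otimes> g \<otimes> id\<^sub>q\<close> for \<open>g : s \<rightarrow> t\<close>, objects being
  lists of strands; a diagram is a list of layers, applied first to last to its input strands.\<close>

datatype ('o, 'm) layer = L "'o list" 'm "'o list" "'o list" "'o list"

fun layer_dom :: "('o, 'm) layer \<Rightarrow> 'o list" where
  "layer_dom (L p g s t q) = p @ s @ q"
fun layer_cod :: "('o, 'm) layer \<Rightarrow> 'o list" where
  "layer_cod (L p g s t q) = p @ t @ q"
fun layer_pre :: "('o, 'm) layer \<Rightarrow> 'o list" where
  "layer_pre (L p g s t q) = p"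
fun layer_post :: "('o, 'm) layer \<Rightarrow> 'o list" where
  "layer_post (L p g s t q) = q"

definition tensor_obj :: "('o, 'm) bmcat \<Rightarrow> 'o list \<Rightarrow> 'o" where
  "tensor_obj C xs = foldr (TO C) xs (Unit C)"

fun layer_mor :: "('o, 'm) bmcat \<Rightarrow> ('o, 'm) layer \<Rightarrow> 'm" where
  "layer_mor C (L p g s t q) = TM C (Id C (tensor_obj C p)) (TM C g (Id C (tensor_obj C q)))"

fun layer_typed :: "('o, 'm) bmcat \<Rightarrow> ('o, 'm) layer \<Rightarrow> bool" where
  "layer_typed C (L p g s t q) = Hom C g (tensor_obj C s) (tensor_obj C t)"

fun diagram_typed :: "('o, 'm) bmcat \<Rightarrow> 'o list \<Rightarrow> ('o, 'm) layer list \<Rightarrow> bool" where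
  "diagram_typed C X [] = True"
| "diagram_typed C X (l # ls) = (layer_typed C l \<and> layer_dom l = X \<and> diagram_typed C (layer_cod l) ls)"

fun diagram_cod :: "'o list \<Rightarrow> ('o, 'm) layer list \<Rightarrow> 'o list" where
  "diagram_cod X [] = X"
| "diagram_cod X (l # ls) = diagram_cod (layer_cod l) ls"

fun diagram_mor :: "('o, 'm) bmcat \<Rightarrow> 'o list \<Rightarrow> ('o, 'm) layer list \<Rightarrow> 'm" where
  "diagram_mor C X [] = Id C (tensor_obj C X)"
| "diagram_mor C X (l # ls) = Cmp C (diagram_mor C (layer_cod l) ls) (layer_mor C l)"

fun whisker_layer :: "'o list \<Rightarrow> 'o list \<Rightarrow> ('o, 'm) layer \<Rightarrow> ('o, 'm) layer" where
  "whisker_layer P Q (L p g s t q) = L (P @ p) g s t (q @ Q)"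

definition whisker :: "'o list \<Rightarrow> 'o list \<Rightarrow> ('o, 'm) layer list \<Rightarrow> ('o, 'm) layer list" where
  "whisker P Q ls = map (whisker_layer P Q) ls"

type_synonym ('o, 'm) rule = "'o list \<times> ('o, 'm) layer list \<times> ('o, 'm) layer list"

definition rule_holds :: "('o, 'm) bmcat \<Rightarrow> ('o, 'm) rule \<Rightarrow> bool" where
  "rule_holds C r \<longleftrightarrow> (case r of (X, a, b) \<Rightarrow>
     diagram_typed C X a \<and> diagram_typed C X b \<and> diagram_cod X a = diagram_cod X b \<and>
     diagram_mor C X a = diagram_mor C X b)"

fun reverse_rule :: "('o, 'm) rule \<Rightarrow> ('o, 'm) rule" where
  "reverse_rule (X, a, b) = (X, b, a)"

fun braid_list_obj :: "('o, 'm) bmcat \<Rightarrow> 'o list \<Rightarrow> 'o \<Rightarrow> ('o, 'm) layer list" where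
  "braid_list_obj C [] Z = []"
| "braid_list_obj C (x # xs) Z = whisker [x] [] (braid_list_obj C xs Z) @ [L [] (Br C x Z) [x, Z] [Z, x] xs]"

fun braid_obj_list :: "('o, 'm) bmcat \<Rightarrow> 'o \<Rightarrow> 'o list \<Rightarrow> ('o, 'm) layer list" where
  "braid_obj_list C Z [] = []"
| "braid_obj_list C Z (x # xs) = L [] (Br C Z x) [Z, x] [x, Z] xs # whisker [x] [] (braid_obj_list C Z xs)"

fun braid_inv_list_obj :: "('o, 'm) bmcat \<Rightarrow> 'o list \<Rightarrow> 'o \<Rightarrow> ('o, 'm) layer list" where
  "braid_inv_list_obj C [] Z = []"
| "braid_inv_list_obj C (x # xs) Z = L [] (BrInv C x Z) [Z, x] [x, Z] xs # whisker [x] [] (braid_inv_list_obj C xs Z)"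

fun braid_inv_obj_list :: "('o, 'm) bmcat \<Rightarrow> 'o \<Rightarrow> 'o list \<Rightarrow> ('o, 'm) layer list" where
  "braid_inv_obj_list C Z [] = []"
| "braid_inv_obj_list C Z (x # xs) = whisker [x] [] (braid_inv_obj_list C Z xs) @ [L [] (BrInv C Z x) [x, Z] [Z, x] xs]"

lemma take_drop_split: "take k (drop n xs) = ys \<Longrightarrow> xs = take n xs @ ys @ drop (n + k) xs"
  by (metis append_take_drop_id drop_drop add.commute)

context braided_cat
begin

lemma tensor_obj_simps [simp]:
  "tensor_obj C [] = Unit C" "tensor_obj C (x # xs) = TO C x (tensor_obj C xs)"
  by (simp_all add: tensor_obj_def)

lemma tensor_obj_append [simp]: "tensor_obj C (xs @ ys) = TO C (tensor_obj C xs) (tensor_obj C ys)"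
  by (induction xs) auto

lemma rule_holds_iff:
  "rule_holds C (X, a, b) \<longleftrightarrow> diagram_typed C X a \<and> diagram_typed C X b \<and>
     diagram_cod X a = diagram_cod X b \<and> diagram_mor C X a = diagram_mor C X b"
  by (simp add: rule_holds_def)

lemma rule_holds_reverse: "rule_holds C (X, a, b) \<Longrightarrow> rule_holds C (X, b, a)"
  by (auto simp: rule_holds_iff)

lemma layer_mor_hom:
  "layer_typed C l \<Longrightarrow>
   Arr C (layer_mor C l) \<and> Dom C (layer_mor C l) = tensor_obj C (layer_dom l) \<and>
   Cod C (layer_mor C l) = tensor_obj C (layer_cod l)"
  by (cases l) (auto simp: Hom_def)

lemma diagram_mor_hom:
  "diagram_typed C X ls \<Longrightarrow>
   Arr C (diagram_mor C X ls) \<and> Dom C (diagram_mor C X ls) = tensor_obj C X \<and>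
   Cod C (diagram_mor C X ls) = tensor_obj C (diagram_cod X ls)"
proof (induction ls arbitrary: X)
  case Nil
  then show ?case by simp
next
  case (Cons l ls)
  then show ?case using layer_mor_hom[of l] by auto
qed

lemma diagram_typed_append:
  "diagram_typed C X (ls1 @ ls2) \<longleftrightarrow> diagram_typed C X ls1 \<and> diagram_typed C (diagram_cod X ls1) ls2"
  by (induction ls1 arbitrary: X) auto

lemma diagram_cod_append: "diagram_cod X (ls1 @ ls2) = diagram_cod (diagram_cod X ls1) ls2"
  by (induction ls1 arbitrary: X) auto

lemma diagram_mor_append:
  "diagram_typed C X (ls1 @ ls2) \<Longrightarrow>
   diagram_mor C X (ls1 @ ls2) = Cmp C (diagram_mor C (diagram_cod X ls1) ls2) (diagram_mor C X ls1)"
proof (induction ls1 arbitrary: X)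
  case Nil
  then show ?case using diagram_mor_hom[of X ls2] by auto
next
  case (Cons l ls1)
  have l: "layer_typed C l" "layer_dom l = X" "diagram_typed C (layer_cod l) (ls1 @ ls2)"
    using Cons.prems by auto
  have ls: "diagram_typed C (layer_cod l) ls1" "diagram_typed C (diagram_cod (layer_cod l) ls1) ls2"
    using l(3) diagram_typed_append by auto
  have "diagram_mor C X ((l # ls1) @ ls2)
      = Cmp C (Cmp C (diagram_mor C (diagram_cod (layer_cod l) ls1) ls2) (diagram_mor C (layer_cod l) ls1))
          (layer_mor C l)"
    using Cons.IH[OF l(3)] by simp
  also have "\<dots> = Cmp C (diagram_mor C (diagram_cod (layer_cod l) ls1) ls2)
                    (Cmp C (diagram_mor C (layer_cod l) ls1) (layer_mor C l))"
    using diagram_mor_hom[OF ls(1)] diagram_mor_hom[OF ls(2)] layer_mor_hom[OF l(1)]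
    by (intro comp_assoc) auto
  finally show ?case by simp
qed

lemma layer_mor_whisker:
  assumes "layer_typed C l"
  shows "layer_mor C (whisker_layer P Q l)
    = TM C (Id C (tensor_obj C P)) (TM C (layer_mor C l) (Id C (tensor_obj C Q)))"
proof (cases l)
  case (L p g s t q)
  then have "Arr C g"
    using assms by (simp add: Hom_def)
  then show ?thesis
    using L tensor_assoc[of "Id C (tensor_obj C P)" "Id C (tensor_obj C p)"
        "TM C g (Id C (TO C (tensor_obj C q) (tensor_obj C Q)))"]
    by (simp add: tensor_assoc)
qed

lemma diagram_typed_whisker: "diagram_typed C X ls \<Longrightarrow> diagram_typed C (P @ X @ Q) (whisker P Q ls)"
proof (induction ls arbitrary: X)
  case Nil
  then show ?case by (simp add: whisker_def)
next
  case (Cons l ls)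
  then show ?case using Cons.IH[of "layer_cod l"] by (cases l) (auto simp: whisker_def)
qed

lemma diagram_cod_whisker: "diagram_cod (P @ X @ Q) (whisker P Q ls) = P @ diagram_cod X ls @ Q"
proof (induction ls arbitrary: X)
  case Nil
  then show ?case by (simp add: whisker_def)
next
  case (Cons l ls)
  then show ?case using Cons.IH[of "layer_cod l"] by (cases l) (auto simp: whisker_def)
qed

lemma whisker_comp:
  assumes "Arr C a" "Arr C b" "Dom C a = Cod C b"
  shows "Cmp C (TM C (Id C P) (TM C a (Id C Q))) (TM C (Id C P) (TM C b (Id C Q)))
    = TM C (Id C P) (TM C (Cmp C a b) (Id C Q))"
proof -
  have "TM C (Cmp C a b) (Id C Q) = Cmp C (TM C a (Id C Q)) (TM C b (Id C Q))"
    using assms interchange[of b a "Id C Q" "Id C Q"] by simp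
  then show ?thesis
    using assms interchange[of "Id C P" "Id C P" "TM C b (Id C Q)" "TM C a (Id C Q)"] by simp
qed

lemma diagram_mor_whisker:
  "diagram_typed C X ls \<Longrightarrow>
   diagram_mor C (P @ X @ Q) (whisker P Q ls)
     = TM C (Id C (tensor_obj C P)) (TM C (diagram_mor C X ls) (Id C (tensor_obj C Q)))"
proof (induction ls arbitrary: X)
  case Nil
  then show ?case by (simp add: whisker_def)
next
  case (Cons l ls)
  have l: "layer_typed C l" "layer_dom l = X" "diagram_typed C (layer_cod l) ls"
    using Cons.prems by auto
  have "layer_cod (whisker_layer P Q l) = P @ layer_cod l @ Q"
    by (cases l) auto
  then have "diagram_mor C (P @ X @ Q) (whisker P Q (l # ls))
      = Cmp C (diagram_mor C (P @ layer_cod l @ Q) (whisker P Q ls)) (layer_mor C (whisker_layer P Q l))"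
    by (simp add: whisker_def)
  also have "\<dots> = Cmp C (TM C (Id C (tensor_obj C P)) (TM C (diagram_mor C (layer_cod l) ls) (Id C (tensor_obj C Q))))
                    (TM C (Id C (tensor_obj C P)) (TM C (layer_mor C l) (Id C (tensor_obj C Q))))"
    using Cons.IH[OF l(3)] layer_mor_whisker[OF l(1)] by simp
  also have "\<dots> = TM C (Id C (tensor_obj C P))
                    (TM C (Cmp C (diagram_mor C (layer_cod l) ls) (layer_mor C l)) (Id C (tensor_obj C Q)))"
    using diagram_mor_hom[OF l(3)] layer_mor_hom[OF l(1)] by (intro whisker_comp) auto
  finally show ?case by simp
qed

lemma diagram_mor_rewrite_in_context:
  assumes "diagram_typed C X Ls" "diagram_typed C X Ls'"
    and "Ls = pre @ whisker P Q a @ post" "Ls' = pre @ whisker P Q b @ post"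
    and "diagram_cod X pre = P @ X0 @ Q" "rule_holds C (X0, a, b)"
  shows "diagram_mor C X Ls = diagram_mor C X Ls'"
proof -
  have ab: "diagram_typed C X0 a" "diagram_typed C X0 b" "diagram_cod X0 a = diagram_cod X0 b"
    "diagram_mor C X0 a = diagram_mor C X0 b"
    using assms(6) by (auto simp: rule_holds_iff)
  have cod: "diagram_cod X (pre @ whisker P Q a) = diagram_cod X (pre @ whisker P Q b)"
    using ab(3) assms(5) by (simp add: diagram_cod_append diagram_cod_whisker)
  have typed: "diagram_typed C X (pre @ whisker P Q a)" "diagram_typed C X (pre @ whisker P Q b)"
    using assms(1-4) diagram_typed_append by (metis append_assoc)+
  have "diagram_mor C X Ls = Cmp C (diagram_mor C (diagram_cod X (pre @ whisker P Q a)) post)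
      (Cmp C (diagram_mor C (P @ X0 @ Q) (whisker P Q a)) (diagram_mor C X pre))"
    using assms(1,3,5) typed(1) diagram_mor_append by (metis append_assoc)
  moreover have "diagram_mor C X Ls' = Cmp C (diagram_mor C (diagram_cod X (pre @ whisker P Q b)) post)
      (Cmp C (diagram_mor C (P @ X0 @ Q) (whisker P Q b)) (diagram_mor C X pre))"
    using assms(2,4,5) typed(2) diagram_mor_append by (metis append_assoc)
  ultimately show ?thesis
    using cod diagram_mor_whisker[OF ab(1)] diagram_mor_whisker[OF ab(2)] ab(4) by simp
qed

lemma rule_holds_interchange:
  assumes "Hom C g1 (tensor_obj C s1) (tensor_obj C t1)" and "Hom C g2 (tensor_obj C s2) (tensor_obj C t2)"
  shows "rule_holds C (s1 @ m @ s2, [L [] g1 s1 t1 (m @ s2), L (t1 @ m) g2 s2 t2 []],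
                                    [L (s1 @ m) g2 s2 t2 [], L [] g1 s1 t1 (m @ t2)])"
proof -
  have g: "Arr C g1" "Dom C g1 = tensor_obj C s1" "Cod C g1 = tensor_obj C t1"
    "Arr C g2" "Dom C g2 = tensor_obj C s2" "Cod C g2 = tensor_obj C t2"
    using assms by (auto simp: Hom_def)
  let ?M = "Id C (tensor_obj C m)"
  have "diagram_mor C (s1 @ m @ s2) [L [] g1 s1 t1 (m @ s2), L (t1 @ m) g2 s2 t2 []]
      = Cmp C (TM C (Id C (tensor_obj C t1)) (TM C ?M g2)) (TM C g1 (TM C ?M (Id C (tensor_obj C s2))))"
    using g tensor_assoc[of "Id C (tensor_obj C t1)" ?M g2] by simp
  also have "\<dots> = TM C (Cmp C (Id C (tensor_obj C t1)) g1)
                      (Cmp C (TM C ?M g2) (TM C ?M (Id C (tensor_obj C s2))))"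
    using g by (simp del: Id_comp comp_Id add: interchange)
  also have "\<dots> = TM C g1 (TM C ?M g2)"
    using g comp_id_left[of g1] comp_id_right[of "TM C ?M g2"] by simp
  finally have lhs: "diagram_mor C (s1 @ m @ s2) [L [] g1 s1 t1 (m @ s2), L (t1 @ m) g2 s2 t2 []]
      = TM C g1 (TM C ?M g2)" .
  have "diagram_mor C (s1 @ m @ s2) [L (s1 @ m) g2 s2 t2 [], L [] g1 s1 t1 (m @ t2)]
      = Cmp C (TM C g1 (TM C ?M (Id C (tensor_obj C t2)))) (TM C (Id C (tensor_obj C s1)) (TM C ?M g2))"
    using g tensor_assoc[of "Id C (tensor_obj C s1)" ?M g2] by simp
  also have "\<dots> = TM C (Cmp C g1 (Id C (tensor_obj C s1)))
                      (Cmp C (TM C ?M (Id C (tensor_obj C t2))) (TM C ?M g2))"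
    using g by (simp del: Id_comp comp_Id add: interchange)
  also have "\<dots> = TM C g1 (TM C ?M g2)"
    using g comp_id_right[of g1] comp_id_left[of "TM C ?M g2"] by simp
  finally show ?thesis
    using lhs assms by (simp add: rule_holds_iff)
qed

lemma diagram_mor_tensor:
  "Hom C f (tensor_obj C s1) (tensor_obj C t1) \<Longrightarrow> Hom C g (tensor_obj C s2) (tensor_obj C t2) \<Longrightarrow>
   diagram_mor C (s1 @ s2) [L [] f s1 t1 s2, L t1 g s2 t2 []] = TM C f g"
  unfolding Hom_def by (simp add: interchange[symmetric])

lemma diagram_cod_take:
  "diagram_typed C X Ls \<Longrightarrow> n < length Ls \<Longrightarrow> diagram_cod X (take n Ls) = layer_dom (Ls ! n)"
proof (induction Ls arbitrary: X n)
  case Nil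
  then show ?case by simp
next
  case (Cons l Ls)
  then show ?case by (cases n) auto
qed

lemma layer_typed_nth: "diagram_typed C X Ls \<Longrightarrow> n < length Ls \<Longrightarrow> layer_typed C (Ls ! n)"
proof (induction Ls arbitrary: X n)
  case Nil
  then show ?case by simp
next
  case (Cons l Ls)
  then show ?case by (cases n) auto
qed


lemma braid_list_obj_denotes:
  "diagram_typed C (xs @ [Z]) (braid_list_obj C xs Z) \<and> diagram_cod (xs @ [Z]) (braid_list_obj C xs Z) = Z # xs \<and>
   diagram_mor C (xs @ [Z]) (braid_list_obj C xs Z) = Br C (tensor_obj C xs) Z"
proof (induction xs)
  case Nil
  then show ?case by (simp add: braid_unit)
next
  case (Cons x xs)
  have w: "diagram_typed C ([x] @ (xs @ [Z]) @ []) (whisker [x] [] (braid_list_obj C xs Z))"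
    using Cons diagram_typed_whisker by blast
  have e: "diagram_cod ([x] @ (xs @ [Z]) @ []) (whisker [x] [] (braid_list_obj C xs Z)) = x # Z # xs"
    using Cons diagram_cod_whisker[of "[x]" "xs @ [Z]" "[]" "braid_list_obj C xs Z"] by simp
  have s: "diagram_mor C ([x] @ (xs @ [Z]) @ []) (whisker [x] [] (braid_list_obj C xs Z))
      = TM C (Id C x) (Br C (tensor_obj C xs) Z)"
    using diagram_mor_whisker[of "xs @ [Z]" "braid_list_obj C xs Z" "[x]" "[]"] Cons by simp
  have w2: "diagram_typed C (x # xs @ [Z]) (braid_list_obj C (x # xs) Z)"
    using w e by (simp add: diagram_typed_append Hom_def)
  show ?case
    using w e s w2 diagram_mor_append[OF w2[simplified]] braid_hexagon_left[of x "tensor_obj C xs" Z]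
    by (simp add: diagram_cod_append)
qed

lemma braid_obj_list_denotes:
  "diagram_typed C (Z # xs) (braid_obj_list C Z xs) \<and> diagram_cod (Z # xs) (braid_obj_list C Z xs) = xs @ [Z] \<and>
   diagram_mor C (Z # xs) (braid_obj_list C Z xs) = Br C Z (tensor_obj C xs)"
proof (induction xs)
  case Nil
  then show ?case by (simp add: braid_unit)
next
  case (Cons x xs)
  have w: "diagram_typed C ([x] @ (Z # xs) @ []) (whisker [x] [] (braid_obj_list C Z xs))"
    using Cons diagram_typed_whisker by blast
  have e: "diagram_cod ([x] @ (Z # xs) @ []) (whisker [x] [] (braid_obj_list C Z xs)) = x # xs @ [Z]"
    using Cons diagram_cod_whisker[of "[x]" "Z # xs" "[]" "braid_obj_list C Z xs"] by simp
  have s: "diagram_mor C ([x] @ (Z # xs) @ []) (whisker [x] [] (braid_obj_list C Z xs))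
      = TM C (Id C x) (Br C Z (tensor_obj C xs))"
    using diagram_mor_whisker[of "Z # xs" "braid_obj_list C Z xs" "[x]" "[]"] Cons by simp
  have w2: "diagram_typed C (Z # x # xs) (braid_obj_list C Z (x # xs))"
    using w e by (simp add: Hom_def)
  show ?case
    using w e s w2 braid_hexagon_right[of Z x "tensor_obj C xs"]
      diagram_mor_append[of "Z # x # xs" "[L [] (Br C Z x) [Z, x] [x, Z] xs]" "whisker [x] [] (braid_obj_list C Z xs)"]
    by (simp add: diagram_cod_append)
qed

lemma braid_inv_list_obj_denotes:
  "diagram_typed C (Z # xs) (braid_inv_list_obj C xs Z) \<and> diagram_cod (Z # xs) (braid_inv_list_obj C xs Z) = xs @ [Z] \<and>
   diagram_mor C (Z # xs) (braid_inv_list_obj C xs Z) = BrInv C (tensor_obj C xs) Z"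
proof (induction xs)
  case Nil
  then show ?case by (simp add: braid_inv_unit)
next
  case (Cons x xs)
  have w: "diagram_typed C ([x] @ (Z # xs) @ []) (whisker [x] [] (braid_inv_list_obj C xs Z))"
    using Cons diagram_typed_whisker by blast
  have e: "diagram_cod ([x] @ (Z # xs) @ []) (whisker [x] [] (braid_inv_list_obj C xs Z)) = x # xs @ [Z]"
    using Cons diagram_cod_whisker[of "[x]" "Z # xs" "[]" "braid_inv_list_obj C xs Z"] by simp
  have s: "diagram_mor C ([x] @ (Z # xs) @ []) (whisker [x] [] (braid_inv_list_obj C xs Z))
      = TM C (Id C x) (BrInv C (tensor_obj C xs) Z)"
    using diagram_mor_whisker[of "Z # xs" "braid_inv_list_obj C xs Z" "[x]" "[]"] Cons by simp
  have w2: "diagram_typed C (Z # x # xs) (braid_inv_list_obj C (x # xs) Z)"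
    using w e by (simp add: Hom_def)
  show ?case
    using w e s w2 braid_inv_hexagon_left[of x "tensor_obj C xs" Z]
      diagram_mor_append[of "Z # x # xs" "[L [] (BrInv C x Z) [Z, x] [x, Z] xs]" "whisker [x] [] (braid_inv_list_obj C xs Z)"]
    by (simp add: diagram_cod_append)
qed

lemma braid_inv_obj_list_denotes:
  "diagram_typed C (xs @ [Z]) (braid_inv_obj_list C Z xs) \<and> diagram_cod (xs @ [Z]) (braid_inv_obj_list C Z xs) = Z # xs \<and>
   diagram_mor C (xs @ [Z]) (braid_inv_obj_list C Z xs) = BrInv C Z (tensor_obj C xs)"
proof (induction xs)
  case Nil
  then show ?case by (simp add: braid_inv_unit)
next
  case (Cons x xs)
  have w: "diagram_typed C ([x] @ (xs @ [Z]) @ []) (whisker [x] [] (braid_inv_obj_list C Z xs))"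
    using Cons diagram_typed_whisker by blast
  have e: "diagram_cod ([x] @ (xs @ [Z]) @ []) (whisker [x] [] (braid_inv_obj_list C Z xs)) = x # Z # xs"
    using Cons diagram_cod_whisker[of "[x]" "xs @ [Z]" "[]" "braid_inv_obj_list C Z xs"] by simp
  have s: "diagram_mor C ([x] @ (xs @ [Z]) @ []) (whisker [x] [] (braid_inv_obj_list C Z xs))
      = TM C (Id C x) (BrInv C Z (tensor_obj C xs))"
    using diagram_mor_whisker[of "xs @ [Z]" "braid_inv_obj_list C Z xs" "[x]" "[]"] Cons by simp
  have w2: "diagram_typed C (x # xs @ [Z]) (braid_inv_obj_list C Z (x # xs))"
    using w e by (simp add: diagram_typed_append Hom_def)
  show ?case
    using w e s w2 diagram_mor_append[OF w2[simplified]] braid_inv_hexagon_right[of Z x "tensor_obj C xs"]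
    by (simp add: diagram_cod_append)
qed

end

section \<open>Rewriting diagrams\<close>

datatype crossing = Br_list_obj | Br_obj_list | BrInv_list_obj | BrInv_obj_list

text \<open>Naturality of the braiding: a box \<open>g : s \<rightarrow> t\<close> slides through its crossing with a strand \<open>Z\<close>.\<close>

fun slide_rule :: "('o, 'm) bmcat \<Rightarrow> crossing \<Rightarrow> 'm \<Rightarrow> 'o list \<Rightarrow> 'o list \<Rightarrow> 'o \<Rightarrow> ('o, 'm) rule" where
  "slide_rule C Br_list_obj g s t Z =
     (s @ [Z], L [] g s t [Z] # braid_list_obj C t Z, braid_list_obj C s Z @ [L [Z] g s t []])"
| "slide_rule C Br_obj_list g s t Z =
     (Z # s, L [Z] g s t [] # braid_obj_list C Z t, braid_obj_list C Z s @ [L [] g s t [Z]])"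
| "slide_rule C BrInv_list_obj g s t Z =
     (Z # s, L [Z] g s t [] # braid_inv_list_obj C t Z, braid_inv_list_obj C s Z @ [L [] g s t [Z]])"
| "slide_rule C BrInv_obj_list g s t Z =
     (s @ [Z], L [] g s t [Z] # braid_inv_obj_list C Z t, braid_inv_obj_list C Z s @ [L [Z] g s t []])"

definition orient :: "bool \<Rightarrow> ('o, 'm) rule \<Rightarrow> ('o, 'm) rule" where
  "orient forward r = (if forward then r else reverse_rule r)"

text \<open>\<open>Rewrite n r\<close> reads the whiskering of \<open>r\<close> off the layer at position \<open>n\<close>;
  \<open>Rewrite_in\<close> gives it explicitly, which is needed when the left-hand side of \<open>r\<close> is empty.\<close>

datatype ('o, 'm) step =
    Rewrite nat "('o, 'm) rule"
  | Rewrite_in nat "'o list" "'o list" "('o, 'm) rule"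
  | Swap nat
  | Slide nat crossing bool 'm "'o list" "'o list" 'o

fun left_of :: "('o, 'm) layer \<Rightarrow> ('o, 'm) layer \<Rightarrow> bool" where
  "left_of (L p1 g1 s1 t1 q1) (L p2 g2 s2 t2 q2) =
     (let m = drop (length p1 + length t1) p2 in p2 = p1 @ t1 @ m \<and> q1 = m @ s2 @ q2)"
fun right_of :: "('o, 'm) layer \<Rightarrow> ('o, 'm) layer \<Rightarrow> bool" where
  "right_of (L p1 g1 s1 t1 q1) (L p2 g2 s2 t2 q2) =
     (let m = drop (length p2 + length s2) p1 in p1 = p2 @ s2 @ m \<and> q2 = m @ t1 @ q1)"
fun swap_left_of :: "('o, 'm) layer \<Rightarrow> ('o, 'm) layer \<Rightarrow> ('o, 'm) layer list" where
  "swap_left_of (L p1 g1 s1 t1 q1) (L p2 g2 s2 t2 q2) =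
     (let m = drop (length p1 + length t1) p2 in [L (p1 @ s1 @ m) g2 s2 t2 q2,
         L p1 g1 s1 t1 (m @ t2 @ q2)])"
fun swap_right_of :: "('o, 'm) layer \<Rightarrow> ('o, 'm) layer \<Rightarrow> ('o, 'm) layer list" where
  "swap_right_of (L p1 g1 s1 t1 q1) (L p2 g2 s2 t2 q2) =
     (let m = drop (length p2 + length s2) p1 in [L p2 g2 s2 t2 (m @ s1 @ q1),
         L (p2 @ t2 @ m) g1 s1 t1 q1])"

fun context_pre :: "('o, 'm) layer \<Rightarrow> ('o, 'm) layer \<Rightarrow> 'o list" where
  "context_pre l l0 = take (length (layer_pre l) - length (layer_pre l0)) (layer_pre l)"
fun context_post :: "('o, 'm) layer \<Rightarrow> ('o, 'm) layer \<Rightarrow> 'o list" where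
  "context_post l l0 = drop (length (layer_post l0)) (layer_post l)"

fun rewrite_at :: "nat \<Rightarrow> ('o, 'm) rule \<Rightarrow> ('o, 'm) layer list \<Rightarrow> ('o, 'm) layer list" where
  "rewrite_at n (X0, a, b) Ls =
     take n Ls @ whisker (context_pre (Ls ! n) (hd a)) (context_post (Ls ! n) (hd a)) b @ drop (n + length a) Ls"

fun matches_at :: "'o list \<Rightarrow> nat \<Rightarrow> ('o, 'm) rule \<Rightarrow> ('o, 'm) layer list \<Rightarrow> bool" where
  "matches_at X n (X0, a, b) Ls =
     (a \<noteq> [] \<and> n < length Ls \<and>
      take (length a) (drop n Ls) = whisker (context_pre (Ls ! n) (hd a)) (context_post (Ls ! n) (hd a)) a \<and>
      diagram_cod X (take n Ls) = context_pre (Ls ! n) (hd a) @ X0 @ context_post (Ls ! n) (hd a))"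

fun apply_step :: "('o, 'm) bmcat \<Rightarrow> ('o, 'm) step \<Rightarrow> ('o, 'm) layer list \<Rightarrow> ('o, 'm) layer list" where
  "apply_step C (Rewrite n r) Ls = rewrite_at n r Ls"
| "apply_step C (Rewrite_in n P Q (X0, a, b)) Ls = take n Ls @ whisker P Q b @ drop (n + length a) Ls"
| "apply_step C (Swap n) Ls =
     take n Ls @ (if left_of (Ls ! n) (Ls ! Suc n) then swap_left_of (Ls ! n) (Ls ! Suc n)
                  else swap_right_of (Ls ! n) (Ls ! Suc n)) @ drop (Suc (Suc n)) Ls"
| "apply_step C (Slide n c forward g s t Z) Ls = rewrite_at n (orient forward (slide_rule C c g s t Z)) Ls"

fun step_ok :: "('o, 'm) bmcat \<Rightarrow> 'o list \<Rightarrow> ('o, 'm) step \<Rightarrow> ('o, 'm) layer list \<Rightarrow> bool" where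
  "step_ok C X (Rewrite n (X0, a, b)) Ls =
     (matches_at X n (X0, a, b) Ls \<and> (rule_holds C (X0, a, b) \<or> rule_holds C (X0, b, a)))"
| "step_ok C X (Rewrite_in n P Q (X0, a, b)) Ls =
     (n \<le> length Ls \<and> take (length a) (drop n Ls) = whisker P Q a \<and> diagram_cod X (take n Ls) = P @ X0 @ Q \<and>
      (rule_holds C (X0, a, b) \<or> rule_holds C (X0, b, a)))"
| "step_ok C X (Swap n) Ls =
     (Suc n < length Ls \<and> (left_of (Ls ! n) (Ls ! Suc n) \<or> right_of (Ls ! n) (Ls ! Suc n)))"
| "step_ok C X (Slide n c forward g s t Z) Ls =
     (Hom C g (tensor_obj C s) (tensor_obj C t) \<and> matches_at X n (orient forward (slide_rule C c g s t Z)) Ls)"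

fun run_steps :: "('o, 'm) bmcat \<Rightarrow> ('o, 'm) step list \<Rightarrow> ('o, 'm) layer list \<Rightarrow> ('o, 'm) layer list" where
  "run_steps C [] Ls = Ls"
| "run_steps C (st # sts) Ls = run_steps C sts (apply_step C st Ls)"

fun valid_run :: "('o, 'm) bmcat \<Rightarrow> 'o list \<Rightarrow> ('o, 'm) step list \<Rightarrow> ('o, 'm) layer list \<Rightarrow> bool" where
  "valid_run C X [] Ls = True"
| "valid_run C X (st # sts) Ls =
     (diagram_typed C X Ls \<and> step_ok C X st Ls \<and> diagram_typed C X (apply_step C st Ls) \<and>
      valid_run C X sts (apply_step C st Ls))"

context braided_cat
begin

lemma slide_rule_holds:
  assumes "Hom C g (tensor_obj C s) (tensor_obj C t)"
  shows "rule_holds C (slide_rule C c g s t Z)"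
proof -
  have g: "Arr C g" "Dom C g = tensor_obj C s" "Cod C g = tensor_obj C t"
    using assms by (auto simp: Hom_def)
  show ?thesis
  proof (cases c)
    case Br_list_obj
    have "diagram_typed C (s @ [Z]) (braid_list_obj C s Z @ [L [Z] g s t []])"
      using braid_list_obj_denotes[of s Z] assms by (simp add: diagram_typed_append)
    moreover have "Cmp C (TM C (Id C Z) g) (Br C (tensor_obj C s) Z) = Cmp C (Br C (tensor_obj C t) Z) (TM C g (Id C Z))"
      using braid_natural[of g "Id C Z"] g by simp
    ultimately show ?thesis
      using Br_list_obj assms g diagram_mor_append braid_list_obj_denotes[of t Z] braid_list_obj_denotes[of s Z]
      by (simp add: rule_holds_iff diagram_cod_append)
  next
    case Br_obj_list
    have "diagram_typed C (Z # s) (braid_obj_list C Z s @ [L [] g s t [Z]])"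
      using braid_obj_list_denotes[of Z s] assms by (simp add: diagram_typed_append)
    moreover have "Cmp C (TM C g (Id C Z)) (Br C Z (tensor_obj C s)) = Cmp C (Br C Z (tensor_obj C t)) (TM C (Id C Z) g)"
      using braid_natural[of "Id C Z" g] g by simp
    ultimately show ?thesis
      using Br_obj_list assms g diagram_mor_append braid_obj_list_denotes[of Z t] braid_obj_list_denotes[of Z s]
      by (simp add: rule_holds_iff diagram_cod_append)
  next
    case BrInv_list_obj
    have "diagram_typed C (Z # s) (braid_inv_list_obj C s Z @ [L [] g s t [Z]])"
      using braid_inv_list_obj_denotes[of Z s] assms by (simp add: diagram_typed_append)
    moreover have "Cmp C (TM C g (Id C Z)) (BrInv C (tensor_obj C s) Z) = Cmp C (BrInv C (tensor_obj C t) Z) (TM C (Id C Z) g)"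
      using braid_inv_natural[of g "Id C Z"] g by simp
    ultimately show ?thesis
      using BrInv_list_obj assms g diagram_mor_append braid_inv_list_obj_denotes[of Z t] braid_inv_list_obj_denotes[of Z s]
      by (simp add: rule_holds_iff diagram_cod_append)
  next
    case BrInv_obj_list
    have "diagram_typed C (s @ [Z]) (braid_inv_obj_list C Z s @ [L [Z] g s t []])"
      using braid_inv_obj_list_denotes[of s Z] assms by (simp add: diagram_typed_append)
    moreover have "Cmp C (TM C (Id C Z) g) (BrInv C Z (tensor_obj C s)) = Cmp C (BrInv C Z (tensor_obj C t)) (TM C g (Id C Z))"
      using braid_inv_natural[of "Id C Z" g] g by simp
    ultimately show ?thesis
      using BrInv_obj_list assms g diagram_mor_append braid_inv_obj_list_denotes[of t Z] braid_inv_obj_list_denotes[of s Z]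
      by (simp add: rule_holds_iff diagram_cod_append)
  qed
qed

lemma rewrite_at_sound:
  assumes "diagram_typed C X Ls" "matches_at X n (X0, a, b) Ls" "rule_holds C (X0, a, b)"
    and "diagram_typed C X (rewrite_at n (X0, a, b) Ls)"
  shows "diagram_mor C X Ls = diagram_mor C X (rewrite_at n (X0, a, b) Ls)"
proof -
  let ?P = "context_pre (Ls ! n) (hd a)" and ?Q = "context_post (Ls ! n) (hd a)"
  have "take (length a) (drop n Ls) = whisker ?P ?Q a" "diagram_cod X (take n Ls) = ?P @ X0 @ ?Q"
    using assms(2) by auto
  then show ?thesis
    using assms(1,3,4)
    by (simp del: context_pre.simps context_post.simps,
        intro diagram_mor_rewrite_in_context[OF assms(1) _ take_drop_split refl]) simp_all
qed


lemma rule_holds_orient: "rule_holds C r \<Longrightarrow> rule_holds C (orient forward r)"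
  by (cases r) (simp add: orient_def rule_holds_reverse)

lemma adjacent_layers:
  assumes "diagram_typed C X Ls" "Suc n < length Ls"
  shows "take 2 (drop n Ls) = [Ls ! n, Ls ! Suc n]" "diagram_cod X (take n Ls) = layer_dom (Ls ! n)"
    and "layer_typed C (Ls ! n)" "layer_typed C (Ls ! Suc n)"
proof -
  have "drop n Ls = Ls ! n # Ls ! Suc n # drop (Suc (Suc n)) Ls"
    using assms(2) by (metis Cons_nth_drop_Suc Suc_lessD)
  then show "take 2 (drop n Ls) = [Ls ! n, Ls ! Suc n]"
    by (simp add: numeral_2_eq_2)
  show "diagram_cod X (take n Ls) = layer_dom (Ls ! n)"
    using diagram_cod_take assms by simp
  show "layer_typed C (Ls ! n)" "layer_typed C (Ls ! Suc n)"
    using layer_typed_nth assms by auto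
qed

lemma swap_left_of_sound:
  assumes "diagram_typed C X Ls" "Suc n < length Ls" "left_of (Ls ! n) (Ls ! Suc n)"
    and "diagram_typed C X (apply_step C (Swap n) Ls)"
  shows "diagram_mor C X Ls = diagram_mor C X (apply_step C (Swap n) Ls)"
proof -
  obtain p1 g1 s1 t1 q1 where l1: "Ls ! n = L p1 g1 s1 t1 q1" by (cases "Ls ! n") auto
  obtain p2 g2 s2 t2 q2 where l2: "Ls ! Suc n = L p2 g2 s2 t2 q2" by (cases "Ls ! Suc n") auto
  define m where "m = drop (length p1 + length t1) p2"
  have c: "p2 = p1 @ t1 @ m" "q1 = m @ s2 @ q2"
    using assms(3) l1 l2 by (auto simp: m_def Let_def)
  have split: "take 2 (drop n Ls) = whisker p1 q2 [L [] g1 s1 t1 (m @ s2), L (t1 @ m) g2 s2 t2 []]"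
    using adjacent_layers(1)[OF assms(1,2)] l1 l2 c by (simp add: whisker_def)
  have "apply_step C (Swap n) Ls = take n Ls @ swap_left_of (Ls ! n) (Ls ! Suc n) @ drop (Suc (Suc n)) Ls"
    using assms(3) by simp
  also have "swap_left_of (Ls ! n) (Ls ! Suc n) = whisker p1 q2 [L (s1 @ m) g2 s2 t2 [],
      L [] g1 s1 t1 (m @ t2)]"
    by (simp add: l1 l2 Let_def m_def[symmetric] whisker_def)
  finally have swapped: "apply_step C (Swap n) Ls
      = take n Ls @ whisker p1 q2 [L (s1 @ m) g2 s2 t2 [],
          L [] g1 s1 t1 (m @ t2)] @ drop (n + 2) Ls"
    by (simp add: numeral_2_eq_2)
  show ?thesis
    by (rule diagram_mor_rewrite_in_context[OF assms(1) _ take_drop_split[OF split] swapped, of "s1 @ m @ s2"])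
      (use assms(4) adjacent_layers[OF assms(1,2)] l1 l2 c
          rule_holds_interchange[of g1 s1 t1 g2 s2 t2 m] in simp_all)
qed

lemma swap_right_of_sound:
  assumes "diagram_typed C X Ls" "Suc n < length Ls" "\<not> left_of (Ls ! n) (Ls ! Suc n)"
    and "right_of (Ls ! n) (Ls ! Suc n)" "diagram_typed C X (apply_step C (Swap n) Ls)"
  shows "diagram_mor C X Ls = diagram_mor C X (apply_step C (Swap n) Ls)"
proof -
  obtain p1 g1 s1 t1 q1 where l1: "Ls ! n = L p1 g1 s1 t1 q1" by (cases "Ls ! n") auto
  obtain p2 g2 s2 t2 q2 where l2: "Ls ! Suc n = L p2 g2 s2 t2 q2" by (cases "Ls ! Suc n") auto
  define m where "m = drop (length p2 + length s2) p1"
  have c: "p1 = p2 @ s2 @ m" "q2 = m @ t1 @ q1"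
    using assms(4) l1 l2 by (auto simp: m_def Let_def)
  have split: "take 2 (drop n Ls) = whisker p2 q1 [L (s2 @ m) g1 s1 t1 [], L [] g2 s2 t2 (m @ t1)]"
    using adjacent_layers(1)[OF assms(1,2)] l1 l2 c by (simp add: whisker_def)
  have "apply_step C (Swap n) Ls = take n Ls @ swap_right_of (Ls ! n) (Ls ! Suc n) @ drop (Suc (Suc n)) Ls"
    using assms(3) by simp
  also have "swap_right_of (Ls ! n) (Ls ! Suc n) = whisker p2 q1 [L [] g2 s2 t2 (m @ s1),
      L (t2 @ m) g1 s1 t1 []]"
    by (simp add: l1 l2 Let_def m_def[symmetric] whisker_def)
  finally have swapped: "apply_step C (Swap n) Ls
      = take n Ls @ whisker p2 q1 [L [] g2 s2 t2 (m @ s1),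
          L (t2 @ m) g1 s1 t1 []] @ drop (n + 2) Ls"
    by (simp add: numeral_2_eq_2)
  show ?thesis
    by (rule diagram_mor_rewrite_in_context[OF assms(1) _ take_drop_split[OF split] swapped, of "s2 @ m @ s1"])
      (use assms(5) adjacent_layers[OF assms(1,2)] l1 l2 c
        rule_holds_reverse[OF rule_holds_interchange[of g2 s2 t2 g1 s1 t1 m]] in simp_all)
qed

lemma apply_step_sound:
  assumes "diagram_typed C X Ls" "step_ok C X st Ls" "diagram_typed C X (apply_step C st Ls)"
  shows "diagram_mor C X Ls = diagram_mor C X (apply_step C st Ls)"
proof (cases st)
  case (Rewrite n r)
  obtain X0 a b where r: "r = (X0, a, b)" by (cases r) auto
  then have "rule_holds C (X0, a, b)"
    using assms(2) Rewrite rule_holds_reverse by auto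
  then show ?thesis
    using rewrite_at_sound assms Rewrite r by simp
next
  case (Rewrite_in n P Q r)
  obtain X0 a b where r: "r = (X0, a, b)" by (cases r) auto
  have "take (length a) (drop n Ls) = whisker P Q a" "diagram_cod X (take n Ls) = P @ X0 @ Q"
    "rule_holds C (X0, a, b)"
    using assms(2) Rewrite_in r rule_holds_reverse by auto
  then show ?thesis
    using assms(1,3) Rewrite_in r
    by (simp, intro diagram_mor_rewrite_in_context[OF _ _ take_drop_split]) simp_all
next
  case (Swap n)
  then show ?thesis
    using assms swap_left_of_sound swap_right_of_sound by (cases "left_of (Ls ! n) (Ls ! Suc n)") auto
next
  case (Slide n c forward g s t Z)
  obtain X0 a b where r: "orient forward (slide_rule C c g s t Z) = (X0, a, b)"
    by (cases "orient forward (slide_rule C c g s t Z)") auto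
  have "rule_holds C (orient forward (slide_rule C c g s t Z))"
    using assms(2) Slide by (simp add: rule_holds_orient slide_rule_holds)
  then show ?thesis
    using rewrite_at_sound assms Slide r by simp
qed

lemma run_steps_sound:
  "diagram_typed C X Ls \<Longrightarrow> valid_run C X sts Ls \<Longrightarrow>
   diagram_typed C X (run_steps C sts Ls) \<and> diagram_mor C X Ls = diagram_mor C X (run_steps C sts Ls)"
proof (induction sts arbitrary: Ls)
  case Nil
  then show ?case by simp
next
  case (Cons st sts)
  then show ?case using apply_step_sound by auto
qed

lemma rule_holds_join: "rule_holds C (X, a, k) \<Longrightarrow>
    rule_holds C (X, b, k) \<Longrightarrow> rule_holds C (X, a, b)"
  by (auto simp: rule_holds_iff)

lemma rule_holds_by_run:
  "diagram_typed C X Ls \<Longrightarrow> valid_run C X sts Ls \<Longrightarrow> run_steps C sts Ls = Ls' \<Longrightarrow>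
   diagram_cod X Ls = diagram_cod X Ls' \<Longrightarrow> rule_holds C (X, Ls, Ls')"
  using run_steps_sound by (auto simp: rule_holds_iff)

lemma rule_holds_comp:
  assumes "rule_holds C (X, a @ b, c @ d)" "diagram_cod X a = Xa" "diagram_cod X c = Xc"
  shows "Cmp C (diagram_mor C Xa b) (diagram_mor C X a) = Cmp C (diagram_mor C Xc d) (diagram_mor C X c)"
  using assms diagram_mor_append by (auto simp: rule_holds_iff diagram_typed_append)

lemma rule_holds_comp_id:
  assumes "rule_holds C (X, a @ b, [])" "diagram_cod X a = Xa"
  shows "Cmp C (diagram_mor C Xa b) (diagram_mor C X a) = Id C (tensor_obj C X)"
  using assms diagram_mor_append by (auto simp: rule_holds_iff diagram_typed_append)

end

section \<open>Braided groups and crossed modules as diagram rules\<close>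

locale braided_crossed_module = braided_cat C for C :: "('o, 'm) bmcat" +
  fixes A Y :: 'o and mu eta Delta eps S Sinv mur Dr :: 'm
  assumes braided_group: "braided_group C A mu eta Delta eps S"
    and hom_Sinv: "Hom C Sinv A A" and S_Sinv: "Cmp C S Sinv = Id C A" and Sinv_S: "Cmp C Sinv S = Id C A"
    and crossed_module: "right_crossed_module C A mu eta Delta eps Y mur Dr"
begin

lemma bialgebra: "bialgebra C A mu eta Delta eps"
  using braided_group by (simp add: braided_group_def)

lemma generator_homs [simp]:
  "Hom C mu (TO C A A) A" "Hom C eta (Unit C) A" "Hom C Delta A (TO C A A)" "Hom C eps A (Unit C)"
  "Hom C S A A" "Hom C Sinv A A" "Hom C mur (TO C Y A) Y" "Hom C Dr Y (TO C Y A)"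
  "Hom C (Br C X Z) (TO C X Z) (TO C Z X)" "Hom C (BrInv C X Z) (TO C Z X) (TO C X Z)"
  using bialgebra braided_group hom_Sinv crossed_module hom_braid hom_braid_inv
  by (auto simp: bialgebra_def braided_group_def right_crossed_module_def right_module_def
      right_comodule_def)

lemma generator_arrs [simp]:
  "Arr C mu" "Dom C mu = TO C A A" "Cod C mu = A"
  "Arr C eta" "Dom C eta = Unit C" "Cod C eta = A"
  "Arr C Delta" "Dom C Delta = A" "Cod C Delta = TO C A A"
  "Arr C eps" "Dom C eps = A" "Cod C eps = Unit C"
  "Arr C S" "Dom C S = A" "Cod C S = A"
  "Arr C Sinv" "Dom C Sinv = A" "Cod C Sinv = A"
  "Arr C mur" "Dom C mur = TO C Y A" "Cod C mur = Y"
  "Arr C Dr" "Dom C Dr = Y" "Cod C Dr = TO C Y A"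
  using generator_homs unfolding Hom_def by blast+

abbreviation "lmu p q \<equiv> L p mu [A, A] [A] q"
abbreviation "leta p q \<equiv> L p eta [] [A] q"
abbreviation "lDelta p q \<equiv> L p Delta [A] [A, A] q"
abbreviation "leps p q \<equiv> L p eps [A] [] q"
abbreviation "lS p q \<equiv> L p S [A] [A] q"
abbreviation "lSinv p q \<equiv> L p Sinv [A] [A] q"
abbreviation "lmur p q \<equiv> L p mur [Y, A] [Y] q"
abbreviation "lDr p q \<equiv> L p Dr [Y] [Y, A] q"
abbreviation "bAA p q \<equiv> L p (Br C A A) [A, A] [A, A] q"
abbreviation "bAY p q \<equiv> L p (Br C A Y) [A, Y] [Y, A] q"
abbreviation "bYA p q \<equiv> L p (Br C Y A) [Y, A] [A, Y] q"
abbreviation "iAY p q \<equiv> L p (BrInv C A Y) [Y, A] [A, Y] q"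
abbreviation "iYA p q \<equiv> L p (BrInv C Y A) [A, Y] [Y, A] q"

abbreviation "assoc \<equiv> ([A, A, A], [lmu [] [A], lmu [] []], [lmu [A] [], lmu [] []])"
lemma assoc_holds: "rule_holds C assoc"
  using bialgebra unfolding rule_holds_iff bialgebra_def by simp

abbreviation "unit_left \<equiv> ([A], [leta [] [A], lmu [] []], [])"
lemma unit_left_holds: "rule_holds C unit_left"
  using bialgebra unfolding rule_holds_iff bialgebra_def by simp

abbreviation "unit_right \<equiv> ([A], [leta [A] [], lmu [] []], [])"
lemma unit_right_holds: "rule_holds C unit_right"
  using bialgebra unfolding rule_holds_iff bialgebra_def by simp

abbreviation "coassoc \<equiv> ([A], [lDelta [] [], lDelta [] [A]], [lDelta [] [], lDelta [A] []])"
lemma coassoc_holds: "rule_holds C coassoc"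
  using bialgebra unfolding rule_holds_iff bialgebra_def by simp

abbreviation "counit_left \<equiv> ([A], [lDelta [] [], leps [] [A]], [])"
lemma counit_left_holds: "rule_holds C counit_left"
  using bialgebra unfolding rule_holds_iff bialgebra_def by simp

abbreviation "counit_right \<equiv> ([A], [lDelta [] [], leps [A] []], [])"
lemma counit_right_holds: "rule_holds C counit_right"
  using bialgebra unfolding rule_holds_iff bialgebra_def by simp

abbreviation "bialgebra_compat \<equiv> ([A, A], [lmu [] [], lDelta [] []], [lDelta [] [A],
    lDelta [A, A] [], bAA [A] [A], lmu [] [A, A], lmu [A] []])"
lemma bialgebra_compat_holds: "rule_holds C bialgebra_compat"
  using bialgebra unfolding rule_holds_iff bialgebra_def
  by (simp add: interchange[symmetric] comp_assoc)

abbreviation "comult_unit \<equiv> ([], [leta [] [], lDelta [] []], [leta [] [], leta [A] []])"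
lemma comult_unit_holds: "rule_holds C comult_unit"
  using bialgebra diagram_mor_tensor[of eta "[]" "[A]" eta "[]" "[A]"]
  unfolding rule_holds_iff bialgebra_def by (simp add: interchange[symmetric] comp_assoc)

abbreviation "counit_mult \<equiv> ([A, A], [lmu [] [], leps [] []], [leps [] [A], leps [] []])"
lemma counit_mult_holds: "rule_holds C counit_mult"
  using bialgebra diagram_mor_tensor[of eps "[A]" "[]" eps "[A]" "[]"]
  unfolding rule_holds_iff bialgebra_def by (simp add: interchange[symmetric] comp_assoc)

abbreviation "antipode_left \<equiv> ([A], [lDelta [] [], lS [] [A], lmu [] []], [leps [] [],
    leta [] []])"
lemma antipode_left_holds: "rule_holds C antipode_left"
  using braided_group unfolding rule_holds_iff braided_group_def by (simp add: comp_assoc)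

abbreviation "antipode_right \<equiv> ([A], [lDelta [] [], lS [A] [], lmu [] []], [leps [] [],
    leta [] []])"
lemma antipode_right_holds: "rule_holds C antipode_right"
  using braided_group unfolding rule_holds_iff braided_group_def by (simp add: comp_assoc)

abbreviation "S_Sinv \<equiv> ([A], [lSinv [] [], lS [] []], [])"
lemma S_Sinv_holds: "rule_holds C S_Sinv"
  using S_Sinv unfolding rule_holds_iff by simp

abbreviation "Sinv_S \<equiv> ([A], [lS [] [], lSinv [] []], [])"
lemma Sinv_S_holds: "rule_holds C Sinv_S"
  using Sinv_S unfolding rule_holds_iff by simp

abbreviation "action_assoc \<equiv> ([Y, A, A], [lmur [] [A], lmur [] []], [lmu [Y] [],
    lmur [] []])"
lemma action_assoc_holds: "rule_holds C action_assoc"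
  using crossed_module unfolding rule_holds_iff right_crossed_module_def right_module_def
  by (simp add: comp_assoc)

abbreviation "action_unit \<equiv> ([Y], [leta [Y] [], lmur [] []], [])"
lemma action_unit_holds: "rule_holds C action_unit"
  using crossed_module unfolding rule_holds_iff right_crossed_module_def right_module_def
  by (simp add: comp_assoc)

abbreviation "coaction_coassoc \<equiv> ([Y], [lDr [] [], lDr [] [A]], [lDr [] [], lDelta [Y] []])"
lemma coaction_coassoc_holds: "rule_holds C coaction_coassoc"
  using crossed_module unfolding rule_holds_iff right_crossed_module_def right_comodule_def
  by (simp add: comp_assoc)

abbreviation "coaction_counit \<equiv> ([Y], [lDr [] [], leps [Y] []], [])"
lemma coaction_counit_holds: "rule_holds C coaction_counit"
  using crossed_module unfolding rule_holds_iff right_crossed_module_def right_comodule_def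
  by (simp add: comp_assoc)

abbreviation "crossed_module_compat \<equiv> ([Y, A], [lDelta [Y] [], bYA [] [A], lmur [A] [],
    lDr [A] [], bAY [] [A], lmu [Y] []],
                          [lDr [] [A], lDelta [Y, A] [], bAA [Y] [A], lmur [] [A, A], lmu [Y] []])"
lemma crossed_module_compat_holds: "rule_holds C crossed_module_compat"
  using crossed_module unfolding rule_holds_iff right_crossed_module_def
  by (simp add: interchange[symmetric] comp_assoc)

abbreviation "braid_inv_braid X Z \<equiv> ([Z, X], [L [] (BrInv C X Z) [Z, X] [X, Z] [],
    L [] (Br C X Z) [X, Z] [Z, X] []], [])"
lemma braid_inv_braid_holds: "rule_holds C (braid_inv_braid X Z)"
  unfolding rule_holds_iff by (simp add: braid_inverse)

abbreviation "braid_braid_inv X Z \<equiv> ([X, Z], [L [] (Br C X Z) [X, Z] [Z, X] [],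
    L [] (BrInv C X Z) [Z, X] [X, Z] []], [])"
lemma braid_braid_inv_holds: "rule_holds C (braid_braid_inv X Z)"
  unfolding rule_holds_iff by (simp add: braid_inverse)

text \<open>The convolution-inverse argument for anti-(co)multiplicativity of \<open>S\<close> takes place on
  \<open>A \<otimes> A\<close>, a coalgebra and an algebra with the braiding \<open>\<Psi>\<^sub>A\<^sub>,\<^sub>A\<close> in the middle.\<close>

abbreviation "tensor_coalg_counit_right \<equiv> ([A, A], [lDelta [] [A], lDelta [A, A] [],
    bAA [A] [A], leps [A, A] [A], leps [A, A] []], [])"
lemma tensor_coalg_counit_right_holds: "rule_holds C tensor_coalg_counit_right"
  by (rule rule_holds_by_run[where sts = "[Slide 2 Br_list_obj False eps [A] [] A, Swap 1,
      Rewrite 0 counit_right,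
      Rewrite 0 counit_right]"])
    (simp_all add: whisker_def orient_def Let_def counit_right_holds)

abbreviation "tensor_coalg_counit_left \<equiv> ([A, A], [lDelta [] [A], lDelta [A, A] [],
    bAA [A] [A], leps [] [A, A, A], leps [] [A, A]], [])"
lemma tensor_coalg_counit_left_holds: "rule_holds C tensor_coalg_counit_left"
  by (rule rule_holds_by_run[where sts = "[Swap 2, Slide 3 Br_obj_list False eps [A] [] A, Swap 1,
      Rewrite 0 counit_left,
      Rewrite 0 counit_left]"])
    (simp_all add: whisker_def orient_def Let_def counit_left_holds)

abbreviation "tensor_coalg_coassoc \<equiv> ([A, A], [lDelta [] [A], lDelta [A, A] [], bAA [A] [A],
    lDelta [A, A] [A], lDelta [A, A, A, A] [], bAA [A, A, A] [A]], [lDelta [] [A],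
    lDelta [A, A] [], bAA [A] [A], lDelta [] [A, A, A], lDelta [A, A] [A, A], bAA [A] [A, A, A]])"
lemma tensor_coalg_coassoc_holds: "rule_holds C tensor_coalg_coassoc"
proof (rule rule_holds_join)
  show "rule_holds C ([A, A], [lDelta [] [A], lDelta [A, A] [], bAA [A] [A], lDelta [A, A] [A],
      lDelta [A, A, A, A] [], bAA [A, A, A] [A]],
      [lDelta [] [A], lDelta [] [A, A], lDelta [A, A, A] [], lDelta [A, A, A] [A],
          bAA [A, A] [A, A], bAA [A, A, A] [A], bAA [A] [A, A, A]])"
    by (rule rule_holds_by_run[where sts = "[Slide 2 Br_list_obj False Delta [A] [A, A] A, Swap 1,
        Rewrite 0 (reverse_rule coassoc),
      Swap 4, Swap 3, Rewrite 2 (reverse_rule coassoc), Swap 5]"])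
      (simp_all add: whisker_def orient_def Let_def coassoc_holds)
  show "rule_holds C ([A, A], [lDelta [] [A], lDelta [A, A] [], bAA [A] [A], lDelta [] [A, A, A],
      lDelta [A, A] [A, A], bAA [A] [A, A, A]],
      [lDelta [] [A], lDelta [] [A, A], lDelta [A, A, A] [], lDelta [A, A, A] [A],
          bAA [A, A] [A, A], bAA [A, A, A] [A], bAA [A] [A, A, A]])"
    by (rule rule_holds_by_run[where sts = "[Swap 2, Swap 1,
        Slide 3 Br_obj_list False Delta [A] [A, A] A]"])
      (simp_all add: whisker_def orient_def Let_def)
qed

abbreviation "mult_convolution_inverse \<equiv> ([A, A], [lDelta [] [A], lDelta [A, A] [],
    bAA [A] [A], lmu [] [A, A], lS [A] [A], lS [A, A] [], bAA [A] [], lmu [A] [], lmu [] []],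
    [leps [] [A], leps [] [], leta [] []])"
lemma mult_convolution_inverse_holds: "rule_holds C mult_convolution_inverse"
  by (rule rule_holds_by_run[where sts = "[Swap 4, Slide 5 Br_list_obj True S [A] [A] A,
      Slide 4 Br_obj_list True S [A] [A] A,
      Swap 3, Slide 1 Br_obj_list True Delta [A] [A, A] A,
      Rewrite 6 (reverse_rule assoc), Swap 3, Swap 4, Rewrite 5 assoc, Swap 4,
      Rewrite 2 antipode_right, Swap 4, Rewrite 3 unit_right,
      Slide 1 Br_obj_list False eps [A] [] A, Swap 1, Swap 2, Rewrite 0 antipode_right,
      Swap 1]"])
    (simp_all add: whisker_def orient_def Let_def assoc_holds antipode_right_holds unit_right_holds)

abbreviation "antipode_antimult \<equiv> ([A, A], [lmu [] [], lS [] []],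
      [lS [] [A], lS [A] [], bAA [] [], lmu [] []])"
lemma antipode_antimult_holds: "rule_holds C antipode_antimult"
  by (rule rule_holds_by_run[where sts = "[Rewrite_in 0 [] [] (reverse_rule tensor_coalg_counit_right),
      Rewrite_in 7 [] [] (reverse_rule unit_right), Swap 6, Swap 5,
      Rewrite 3 (reverse_rule mult_convolution_inverse),
      Rewrite 0 tensor_coalg_coassoc, Swap 11, Swap 12,
      Rewrite 13 (reverse_rule assoc), Swap 6, Swap 7, Swap 8, Swap 9, Swap 9, Swap 10,
      Swap 11, Swap 12, Swap 8, Swap 9, Swap 10, Swap 11, Swap 7, Swap 8, Swap 9,
      Swap 10, Swap 6, Swap 7, Swap 8, Swap 9, Swap 6,
      Rewrite 3 (reverse_rule bialgebra_compat), Rewrite 4 antipode_left,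
      Rewrite 3 counit_mult, Swap 5, Swap 6, Swap 7, Swap 8, Rewrite 9 unit_left,
      Rewrite 0 tensor_coalg_counit_left]"])
    (simp_all add: whisker_def orient_def Let_def tensor_coalg_counit_right_holds unit_right_holds
        mult_convolution_inverse_holds tensor_coalg_coassoc_holds assoc_holds
        bialgebra_compat_holds antipode_left_holds counit_mult_holds unit_left_holds
        tensor_coalg_counit_left_holds)

abbreviation "tensor_alg_unit_right \<equiv> ([A, A], [leta [A, A] [], leta [A, A, A] [],
    bAA [A] [A], lmu [] [A, A], lmu [A] []],
      [])"
lemma tensor_alg_unit_right_holds: "rule_holds C tensor_alg_unit_right"
  by (rule rule_holds_by_run[where sts = "[Swap 0, Slide 1 Br_obj_list True eta [] [A] A,
      Rewrite 1 unit_right,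
      Rewrite 0 unit_right]"])
    (simp_all add: whisker_def orient_def Let_def unit_right_holds)

abbreviation "tensor_alg_unit_left \<equiv> ([A, A], [leta [] [A, A], leta [A] [A, A], bAA [A] [A],
    lmu [] [A, A], lmu [A] []],
      [])"
lemma tensor_alg_unit_left_holds: "rule_holds C tensor_alg_unit_left"
  by (rule rule_holds_by_run[where sts = "[Slide 1 Br_list_obj True eta [] [A] A, Swap 0,
      Rewrite 1 unit_left,
      Rewrite 0 unit_left]"])
    (simp_all add: whisker_def orient_def Let_def unit_left_holds)

abbreviation "tensor_alg_assoc \<equiv> ([A, A, A, A, A, A], [bAA [A, A, A] [A], lmu [A, A] [A, A],
    lmu [A, A, A] [], bAA [A] [A], lmu [] [A, A], lmu [A] []],
      [bAA [A] [A, A, A], lmu [] [A, A, A, A], lmu [A] [A, A], bAA [A] [A], lmu [] [A, A],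
          lmu [A] []])"
lemma tensor_alg_assoc_holds: "rule_holds C tensor_alg_assoc"
proof (rule rule_holds_join)
  show "rule_holds C ([A, A, A, A, A, A], [bAA [A, A, A] [A], lmu [A, A] [A, A], lmu [A, A, A] [],
      bAA [A] [A], lmu [] [A, A], lmu [A] []],
      [bAA [A] [A, A, A], bAA [A, A, A] [A], bAA [A, A] [A, A], lmu [] [A, A, A, A],
          lmu [] [A, A, A], lmu [A] [A], lmu [A] []])"
    by (rule rule_holds_by_run[where sts = "[Swap 2, Slide 1 Br_obj_list True mu [A, A] [A] A,
        Swap 4,
      Rewrite 3 (reverse_rule assoc), Rewrite 5 (reverse_rule assoc), Swap 0]"])
      (simp_all add: whisker_def orient_def Let_def assoc_holds)
  show "rule_holds C ([A, A, A, A, A, A], [bAA [A] [A, A, A], lmu [] [A, A, A, A], lmu [A] [A, A],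
      bAA [A] [A], lmu [] [A, A], lmu [A] []],
      [bAA [A] [A, A, A], bAA [A, A, A] [A], bAA [A, A] [A, A], lmu [] [A, A, A, A],
          lmu [] [A, A, A], lmu [A] [A], lmu [A] []])"
    by (rule rule_holds_by_run[where sts = "[Slide 2 Br_list_obj True mu [A, A] [A] A, Swap 1,
        Swap 2, Swap 4]"])
      (simp_all add: whisker_def orient_def Let_def)
qed

abbreviation "comult_convolution_inverse \<equiv> ([A], [lDelta [] [], lDelta [] [A],
    lDelta [A, A] [], bAA [A, A] [], lS [A, A] [A], lS [A, A, A] [], bAA [A] [A], lmu [] [A, A],
    lmu [A] []],
      [leps [] [], leta [] [], leta [A] []])"
lemma comult_convolution_inverse_holds: "rule_holds C comult_convolution_inverse"
  by (rule rule_holds_by_run[where sts = "[Swap 4, Slide 5 Br_obj_list True S [A] [A] A, Swap 4,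
      Swap 1,
      Rewrite 0 (reverse_rule coassoc), Rewrite 1 coassoc,
      Slide 2 Br_list_obj True Delta [A] [A, A] A, Swap 4, Swap 3, Swap 6,
      Rewrite 4 antipode_right, Slide 2 Br_obj_list False S [A] [A] A,
      Slide 3 Br_list_obj False eps [A] [] A, Swap 2, Rewrite 1 counit_right, Swap 2,
      Rewrite 0 antipode_right]"])
    (simp_all add: whisker_def orient_def Let_def coassoc_holds antipode_right_holds
        counit_right_holds)

abbreviation "antipode_anticomult \<equiv> ([A], [lS [] [], lDelta [] []],
      [lDelta [] [], bAA [] [], lS [] [A], lS [A] []])"
lemma antipode_anticomult_holds: "rule_holds C antipode_anticomult"
  by (rule rule_holds_by_run[where sts = "[Rewrite_in 2 [] [] (reverse_rule tensor_alg_unit_right),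
      Rewrite_in 0 [] [] (reverse_rule counit_right), Swap 1, Swap 2,
      Rewrite 3 (reverse_rule comult_convolution_inverse), Rewrite 9 tensor_alg_assoc,
      Swap 8, Swap 9, Swap 10, Swap 7, Swap 8, Swap 9, Swap 6, Swap 7, Swap 8, Swap 5,
      Swap 6, Swap 7, Swap 2, Swap 1, Rewrite 0 (reverse_rule coassoc),
      Rewrite 3 (reverse_rule bialgebra_compat), Rewrite 1 antipode_left,
      Rewrite 2 comult_unit, Rewrite 0 counit_left, Swap 1, Swap 2, Swap 3, Swap 4,
      Swap 0, Swap 1, Swap 2, Swap 3, Rewrite 4 tensor_alg_unit_left]"])
    (simp_all add: whisker_def orient_def Let_def tensor_alg_unit_right_holds counit_right_holds
        comult_convolution_inverse_holds tensor_alg_assoc_holds coassoc_holds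
        bialgebra_compat_holds antipode_left_holds comult_unit_holds counit_left_holds
        tensor_alg_unit_left_holds)

abbreviation "coaction_after_action \<equiv> ([Y, A], [lmur [] [], lDr [] []],
      [lDelta [Y] [], bYA [] [A], lDr [A] [A], lDelta [A, Y, A] [], bAA [A, Y] [A],
          lmur [A] [A, A], lmu [A, Y] [], bAY [] [A], lS [Y] [A], lmu [Y] []])"
lemma coaction_after_action_holds: "rule_holds C coaction_after_action"
  by (rule rule_holds_by_run[where sts = "[Rewrite_in 0 [Y] [] (reverse_rule counit_left),
      Slide 1 Br_obj_list True eps [A] [] Y,
      Swap 2, Swap 3, Slide 4 Br_list_obj True eps [A] [] Y,
      Rewrite_in 6 [Y] [] (reverse_rule unit_left),
      Rewrite 5 (reverse_rule antipode_left), Rewrite 7 assoc,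
      Slide 4 Br_list_obj False Delta [A] [A, A] Y, Swap 3, Swap 2,
      Slide 1 Br_obj_list False Delta [A] [A, A] Y, Rewrite 0 coassoc, Swap 1, Swap 8,
      Swap 7, Rewrite 2 crossed_module_compat]"])
    (simp_all add: whisker_def orient_def Let_def counit_left_holds unit_left_holds
        antipode_left_holds assoc_holds coassoc_holds crossed_module_compat_holds)

definition sigma :: 'm where
  "sigma = Cmp C mur (Cmp C (TM C (Id C Y) S) Dr)"

lemma sigma_hom [simp]: "Hom C sigma Y Y"
  by (simp add: sigma_def Hom_def)

abbreviation "lsigma p q \<equiv> L p sigma [Y] [Y] q"
abbreviation "sigma_fold \<equiv> ([Y], [lDr [] [], lS [Y] [], lmur [] []], [lsigma [] []])"
lemma sigma_fold_holds: "rule_holds C sigma_fold"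
  unfolding rule_holds_iff by (simp add: sigma_def Hom_def comp_assoc)

abbreviation "sigma_after_action \<equiv> ([Y, A], [lmur [] [], lDr [] [], lS [Y] [], lmur [] []],
      [bYA [] [], bAY [] [], lDr [] [A], lS [Y] [A], lmur [] [A], lS [Y] [], lS [Y] [],
          lmur [] []])"
lemma sigma_after_action_holds: "rule_holds C sigma_after_action"
  by (rule rule_holds_by_run[where sts = "[Rewrite 0 coaction_after_action,
      Rewrite 9 antipode_antimult, Swap 6, Swap 7, Swap 8,
      Rewrite 9 antipode_antimult, Rewrite 14 (reverse_rule action_assoc),
      Slide 12 Br_obj_list True mu [A, A] [A] A, Rewrite 14 (reverse_rule action_assoc),
      Slide 10 Br_obj_list True S [A] [A] A, Slide 9 Br_list_obj True S [A] [A] A,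
      Swap 8, Swap 7, Swap 6, Swap 5, Slide 3 Br_obj_list True Delta [A] [A, A] A,
      Slide 10 Br_obj_list True S [A] [A] A, Swap 11, Swap 9,
      Slide 10 Br_obj_list True S [A] [A] A, Slide 8 Br_list_obj True S [A] [A] A,
      Slide 7 Br_list_obj True S [A] [A] A, Slide 9 Br_list_obj True S [A] [A] A,
      Slide 8 Br_list_obj True S [A] [A] A, Swap 11, Swap 10, Swap 9, Swap 8,
      Slide 7 Br_obj_list False S [A] [A] A, Swap 6, Swap 12, Swap 11, Swap 10, Swap 9,
      Slide 7 Br_obj_list False mur [Y, A] [Y] A, Swap 5, Rewrite 6 action_assoc,
      Rewrite 4 antipode_right, Rewrite 5 action_unit,
      Slide 3 Br_obj_list False eps [A] [] A, Swap 2, Swap 1, Rewrite 0 counit_right,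
      Slide 1 Br_obj_list True Dr [Y] [Y, A] A, Swap 4, Swap 5, Swap 3, Swap 4]"])
    (simp_all add: whisker_def orient_def Let_def coaction_after_action_holds
        antipode_antimult_holds action_assoc_holds antipode_right_holds action_unit_holds
        counit_right_holds)

abbreviation "coaction_after_sigma \<equiv> ([Y], [lDr [] [], lS [Y] [], lmur [] [], lDr [] []],
      [lDr [] [], bYA [] [], bAY [] [], lDr [] [A], lS [Y] [A], lmur [] [A], lS [Y] [], lS [Y] []])"
lemma coaction_after_sigma_holds: "rule_holds C coaction_after_sigma"
  by (rule rule_holds_by_run[where sts = "[Rewrite 2 coaction_after_action,
      Rewrite 1 antipode_anticomult, Swap 6, Swap 5,
      Rewrite 4 antipode_anticomult, Slide 8 Br_list_obj False Dr [Y] [Y, A] A, Swap 7,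
      Swap 6, Swap 5, Swap 4, Swap 3, Swap 2, Swap 1, Rewrite 0 coaction_coassoc,
      Rewrite 1 (reverse_rule coassoc), Swap 4,
      Slide 3 Br_list_obj False Delta [A] [A, A] A, Rewrite 2 (reverse_rule coassoc),
      Swap 9, Swap 10, Swap 11, Swap 8, Swap 9, Slide 10 Br_obj_list True S [A] [A] A,
      Swap 6, Slide 7 Br_obj_list True S [A] [A] A,
      Slide 8 Br_obj_list True S [A] [A] Y, Swap 6, Swap 3,
      Slide 4 Br_list_obj True Delta [A] [A, A] A, Swap 8, Swap 7,
      Slide 5 Br_list_obj True Delta [A] [A, A] A, Swap 6, Swap 7, Swap 8, Swap 10,
      Swap 9, Rewrite 10 antipode_right, Swap 9, Swap 8, Swap 7, Swap 6,
      Slide 5 Br_list_obj False eps [A] [] A, Slide 4 Br_list_obj False eps [A] [] A,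
      Swap 3, Rewrite 2 counit_left, Swap 7, Swap 8, Rewrite 9 unit_right,
      Rewrite 0 (reverse_rule coaction_coassoc),
      Slide 1 Br_list_obj True Dr [Y] [Y, A] A,
      Slide 5 Br_obj_list True mur [Y, A] [Y] A, Swap 4,
      Slide 5 Br_obj_list True S [A] [A] A, Slide 3 Br_list_obj True S [A] [A] Y,
      Slide 4 Br_list_obj True S [A] [A] A, Slide 2 Br_obj_list True Dr [Y] [Y, A] A,
      Swap 4, Swap 5]"])
    (simp_all add: whisker_def orient_def Let_def coaction_after_action_holds
        antipode_anticomult_holds coaction_coassoc_holds coassoc_holds antipode_right_holds
        counit_left_holds unit_right_holds)

abbreviation "sigma_diag \<equiv> [lDr [] [], lS [Y] [], lmur [] []]"
abbreviation "sigma_inv_diag \<equiv> [lDr [] [], iAY [] [], lSinv [] [Y], lSinv [] [Y], iYA [] [],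
    lmur [] []]"
abbreviation "source_action_diag \<equiv> [lSinv [] [Y], iYA [] [], lmur [] []]"
abbreviation "target_action_diag \<equiv> [lS [] [Y], bAY [] [], lmur [] []]"
abbreviation "source_coaction_diag \<equiv> [lDr [] [], bYA [] [], lS [] [Y]]"
abbreviation "target_coaction_diag \<equiv> [lDr [] [], iAY [] [], lSinv [] [Y]]"

lemma sigma_right_inverse_holds: "rule_holds C ([Y], sigma_inv_diag @ sigma_diag, [])"
  by (rule rule_holds_by_run[where sts = "[Rewrite 5 sigma_after_action,
      Rewrite 4 (braid_inv_braid Y A),
      Slide 3 Br_list_obj True Sinv [A] [A] Y, Slide 2 Br_list_obj True Sinv [A] [A] Y,
      Rewrite 1 (braid_inv_braid A Y), Swap 2, Swap 3, Swap 4, Swap 1, Swap 2, Swap 3,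
      Rewrite 5 S_Sinv, Rewrite 4 S_Sinv, Rewrite 0 coaction_coassoc,
      Rewrite 3 action_assoc, Rewrite 1 antipode_left, Rewrite 2 action_unit,
      Rewrite 0 coaction_counit]"])
    (simp_all add: whisker_def orient_def Let_def sigma_after_action_holds braid_inv_braid_holds
        S_Sinv_holds coaction_coassoc_holds action_assoc_holds antipode_left_holds
        action_unit_holds coaction_counit_holds)

lemma sigma_left_inverse_holds: "rule_holds C ([Y], sigma_diag @ sigma_inv_diag, [])"
  by (rule rule_holds_by_run[where sts = "[Rewrite 0 coaction_after_sigma, Rewrite 3 sigma_fold,
      Slide 5 BrInv_list_obj True S [A] [A] Y, Slide 4 BrInv_list_obj True S [A] [A] Y,
      Slide 3 BrInv_obj_list True sigma [Y] [Y] A, Rewrite 6 Sinv_S, Rewrite 5 Sinv_S,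
      Slide 4 BrInv_list_obj True sigma [Y] [Y] A, Rewrite 2 (braid_braid_inv A Y),
      Rewrite 1 (braid_braid_inv Y A), Rewrite 1 (reverse_rule sigma_fold),
      Rewrite 0 coaction_coassoc, Rewrite 3 action_assoc, Rewrite 1 antipode_left,
      Rewrite 2 action_unit, Rewrite 0 coaction_counit]"])
    (simp_all add: whisker_def orient_def Let_def coaction_after_sigma_holds sigma_fold_holds
        Sinv_S_holds braid_braid_inv_holds coaction_coassoc_holds action_assoc_holds
        antipode_left_holds action_unit_holds coaction_counit_holds)

lemma sigma_action_holds:
  "rule_holds C ([A, Y], source_action_diag @ sigma_diag, whisker [A] [] sigma_diag @ target_action_diag)"
  by (rule rule_holds_by_run[where sts = "[Rewrite 2 sigma_after_action,
      Rewrite 1 (braid_inv_braid Y A), Rewrite 2 sigma_fold,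
      Slide 1 Br_obj_list False sigma [Y] [Y] A, Slide 2 Br_list_obj False S [A] [A] Y,
      Slide 3 Br_list_obj False S [A] [A] Y, Swap 0, Rewrite 1 S_Sinv,
      Rewrite 0 (reverse_rule sigma_fold)]"])
    (simp_all add: whisker_def orient_def Let_def sigma_after_action_holds braid_inv_braid_holds
        sigma_fold_holds S_Sinv_holds)

lemma sigma_coaction_holds:
  "rule_holds C ([Y], sigma_diag @ target_coaction_diag, source_coaction_diag @ whisker [A] [] sigma_diag)"
  by (rule rule_holds_by_run[where sts = "[Rewrite 0 coaction_after_sigma, Rewrite 3 sigma_fold,
      Slide 5 BrInv_list_obj True S [A] [A] Y, Slide 4 BrInv_list_obj True S [A] [A] Y,
      Slide 3 BrInv_obj_list True sigma [Y] [Y] A, Rewrite 2 (braid_braid_inv A Y),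
      Rewrite 4 Sinv_S, Swap 2, Rewrite 3 (reverse_rule sigma_fold)]"])
    (simp_all add: whisker_def orient_def Let_def coaction_after_sigma_holds sigma_fold_holds
        braid_braid_inv_holds Sinv_S_holds)

lemma sigma_diag_mor: "diagram_mor C [Y] sigma_diag = sigma"
  by (simp add: sigma_def comp_assoc)

lemma whisker_sigma_diag_mor: "diagram_mor C [A, Y] (whisker [A] [] sigma_diag) = TM C (Id C A) sigma"
  using diagram_mor_whisker[of "[Y]" sigma_diag "[A]" "[]"] sigma_diag_mor by simp

lemma sigma_inv_diag_mor:
  "diagram_mor C [Y] sigma_inv_diag
     = Cmp C mur (Cmp C (BrInv C Y A) (Cmp C (TM C (Cmp C Sinv Sinv) (Id C Y)) (Cmp C (BrInv C A Y) Dr)))"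
  using interchange[of Sinv Sinv "Id C Y" "Id C Y"] by (simp add: comp_assoc)

lemma action_diag_mors:
  "diagram_mor C [A, Y] source_action_diag = Cmp C mur (Cmp C (BrInv C Y A) (TM C Sinv (Id C Y)))"
  "diagram_mor C [A, Y] target_action_diag = Cmp C mur (Cmp C (Br C A Y) (TM C S (Id C Y)))"
  by (simp_all add: comp_assoc)

lemma coaction_diag_mors:
  "diagram_mor C [Y] source_coaction_diag = Cmp C (TM C S (Id C Y)) (Cmp C (Br C Y A) Dr)"
  "diagram_mor C [Y] target_coaction_diag = Cmp C (TM C Sinv (Id C Y)) (Cmp C (BrInv C A Y) Dr)"
  by (simp_all add: comp_assoc)

lemma sigma_inverse:
  "Cmp C sigma (diagram_mor C [Y] sigma_inv_diag) = Id C Y"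
  "Cmp C (diagram_mor C [Y] sigma_inv_diag) sigma = Id C Y"
  using rule_holds_comp_id[OF sigma_right_inverse_holds, of "[Y]"]
    rule_holds_comp_id[OF sigma_left_inverse_holds, of "[Y]"]
  unfolding sigma_diag_mor by simp_all

lemma sigma_action_map:
  "Cmp C sigma (diagram_mor C [A, Y] source_action_diag)
     = Cmp C (diagram_mor C [A, Y] target_action_diag) (TM C (Id C A) sigma)"
  using rule_holds_comp[OF sigma_action_holds, of "[Y]" "[A, Y]"]
  unfolding sigma_diag_mor whisker_sigma_diag_mor by (simp add: whisker_def)

lemma sigma_coaction_map:
  "Cmp C (diagram_mor C [Y] target_coaction_diag) sigma
     = Cmp C (TM C (Id C A) sigma) (diagram_mor C [Y] source_coaction_diag)"
  using rule_holds_comp[OF sigma_coaction_holds, of "[Y]" "[A, Y]"]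
  unfolding sigma_diag_mor whisker_sigma_diag_mor by simp

end

theorem mainTheorem8:
  fixes C :: "('o, 'm) bmcat"
    and A Y :: 'o
    and mu eta Delta eps S Sinv mur Dr :: 'm
  assumes "braided_strict_monoidal C"
    and "braided_group C A mu eta Delta eps S"
    and "Hom C Sinv A A"
    and "Cmp C S Sinv = Id C A" and "Cmp C Sinv S = Id C A"
    and "right_crossed_module C A mu eta Delta eps Y mur Dr"
  shows "let sigma = Cmp C mur (Cmp C (TM C (Id C Y) S) Dr);
             sigmainv = Cmp C mur (Cmp C (BrInv C Y A)
                          (Cmp C (TM C (Cmp C Sinv Sinv) (Id C Y)) (Cmp C (BrInv C A Y) Dr)));
             act1 = Cmp C mur (Cmp C (BrInv C Y A) (TM C Sinv (Id C Y)));
             coact1 = Cmp C (TM C S (Id C Y)) (Cmp C (Br C Y A) Dr);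
             act2 = Cmp C mur (Cmp C (Br C A Y) (TM C S (Id C Y)));
             coact2 = Cmp C (TM C Sinv (Id C Y)) (Cmp C (BrInv C A Y) Dr)
         in Hom C sigma Y Y \<and> Hom C sigmainv Y Y \<and>
            Cmp C sigma sigmainv = Id C Y \<and> Cmp C sigmainv sigma = Id C Y \<and>
            Cmp C sigma act1 = Cmp C act2 (TM C (Id C A) sigma) \<and>
            Cmp C coact2 sigma = Cmp C (TM C (Id C A) sigma) coact1"
proof -
  interpret braided_crossed_module C A Y mu eta Delta eps S Sinv mur Dr
    using assms by unfold_locales
  have "Hom C (diagram_mor C [Y] sigma_inv_diag) Y Y"
    using diagram_mor_hom[of "[Y]" sigma_inv_diag] by (simp add: Hom_def)
  then show ?thesis
    using sigma_inverse sigma_action_map sigma_coaction_map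
    unfolding Let_def sigma_def[symmetric] sigma_inv_diag_mor action_diag_mors coaction_diag_mors
    by simp
qed

end
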